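(* Let $X$ be a real Banach space and let $Y\subset X^*$ be a $w^*$-dense and norm-closed linear subspace. Then the locally convex space $(X,\mu(X,Y))$ is quasi-complete if and only if it is complete.
   Context: For a $w^*$-dense linear subspace $Y\subset X^*$ (not necessarily norm-closed), $\mu(X,Y)$ denotes the Mackey topology on $X$ associated to the dual pair $\langle X,Y\rangle$, i.e. the locally convex topology on $X$ of uniform convergence on the members of the family of all absolutely convex $w^*$-compact subsets of $Y$. A locally convex space is quasi-complete if every bounded closed subset of it is complete. *)

theory Defs
  imports "HOL-Analysis.Analysis"
begin

text \<open>The dual X* of a real Banach space X is modelled by the type 'a \<Rightarrow>L real
  of bounded linear functionals (with its operator norm).\<close>

definition weak_star_topology :: "('a::real_normed_vector \<Rightarrow>\<^sub>L real) topology" where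
  "weak_star_topology =
     topology_generated_by {{f. blinfun_apply f x \<in> U} | x U. open U}"

definition absolutely_convex :: "'b::real_vector set \<Rightarrow> bool" where
  "absolutely_convex K \<longleftrightarrow>
     (\<forall>f\<in>K. \<forall>g\<in>K. \<forall>a b::real. \<bar>a\<bar> + \<bar>b\<bar> \<le> 1 \<longrightarrow> a *\<^sub>R f + b *\<^sub>R g \<in> K)"

text \<open>The family of (nonempty) absolutely convex weak-star compact subsets of Y
  (the empty set only yields the zero seminorm and is irrelevant).\<close>
definition mackey_family :: "('a::real_normed_vector \<Rightarrow>\<^sub>L real) set \<Rightarrow> ('a \<Rightarrow>\<^sub>L real) set set" where
  "mackey_family Y =
     {K. K \<subseteq> Y \<and> K \<noteq> {} \<and> absolutely_convex K \<and> compactin weak_star_topology K}"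

definition sup_seminorm :: "('a::real_normed_vector \<Rightarrow>\<^sub>L real) set \<Rightarrow> 'a \<Rightarrow> real" where
  "sup_seminorm K x = (SUP f\<in>K. \<bar>blinfun_apply f x\<bar>)"

definition mackey_topology :: "('a::real_normed_vector \<Rightarrow>\<^sub>L real) set \<Rightarrow> 'a topology" where
  "mackey_topology Y =
     topology_generated_by
       {{x. sup_seminorm K (x - x0) < e} | K x0 e. K \<in> mackey_family Y}"

text \<open>Cauchy filters and convergence of filters for mu(X,Y) (uniform structure
  given by the seminorms; filters are equivalent to nets).\<close>
definition mackey_cauchy :: "('a::real_normed_vector \<Rightarrow>\<^sub>L real) set \<Rightarrow> 'a filter \<Rightarrow> bool" where
  "mackey_cauchy Y F \<longleftrightarrow> F \<noteq> bot \<and>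
     (\<forall>K\<in>mackey_family Y. \<forall>e>0. \<exists>A. eventually (\<lambda>x. x \<in> A) F \<and>
        (\<forall>x\<in>A. \<forall>y\<in>A. sup_seminorm K (x - y) < e))"

definition mackey_converges :: "('a::real_normed_vector \<Rightarrow>\<^sub>L real) set \<Rightarrow> 'a filter \<Rightarrow> 'a \<Rightarrow> bool" where
  "mackey_converges Y F x0 \<longleftrightarrow>
     (\<forall>K\<in>mackey_family Y. \<forall>e>0. eventually (\<lambda>x. sup_seminorm K (x - x0) < e) F)"

definition mackey_complete_set :: "('a::real_normed_vector \<Rightarrow>\<^sub>L real) set \<Rightarrow> 'a set \<Rightarrow> bool" where
  "mackey_complete_set Y B \<longleftrightarrow>
     (\<forall>F. mackey_cauchy Y F \<and> eventually (\<lambda>x. x \<in> B) F \<longrightarrow>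
          (\<exists>x0\<in>B. mackey_converges Y F x0))"

definition mackey_bounded :: "('a::real_normed_vector \<Rightarrow>\<^sub>L real) set \<Rightarrow> 'a set \<Rightarrow> bool" where
  "mackey_bounded Y B \<longleftrightarrow> (\<forall>K\<in>mackey_family Y. \<exists>M. \<forall>x\<in>B. sup_seminorm K x \<le> M)"

definition mackey_complete :: "('a::real_normed_vector \<Rightarrow>\<^sub>L real) set \<Rightarrow> bool" where
  "mackey_complete Y \<longleftrightarrow> mackey_complete_set Y UNIV"

definition mackey_quasi_complete :: "('a::real_normed_vector \<Rightarrow>\<^sub>L real) set \<Rightarrow> bool" where
  "mackey_quasi_complete Y \<longleftrightarrow>
     (\<forall>B. mackey_bounded Y B \<and> closedin (mackey_topology Y) B \<longrightarrow> mackey_complete_set Y B)"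

end

theory Submission
  imports Defs
begin

text \<open>
  A Cauchy filter that lives on a closed set converges to a point of that set, so completeness
  implies quasi-completeness. Conversely, let \<open>F\<close> be a Cauchy filter. The limits of
  \<open>y(x)\<close> along \<open>F\<close> define a functional \<open>\<phi>\<close> on \<open>Y\<close>; since \<open>Y\<close> is norm closed it contains
  the weak-star compact hulls \<open>{\<Sum>n. a\<^sub>n z\<^sub>n | \<bar>a\<^sub>n\<bar> \<le> 1}\<close> of norm-summable sequences,
  and testing \<open>F\<close> on them shows \<open>\<bar>\<phi> y\<bar> \<le> r\<^sub>0 \<parallel>y\<parallel>\<close>. Every set of \<open>F\<close> then comes
  arbitrarily close, in each Mackey seminorm, to \<open>D = {x. \<forall>y\<in>Y. \<bar>y x\<bar> \<le> (4 r\<^sub>0 + 1) \<parallel>y\<parallel>}\<close>: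
  otherwise Hahn-Banach and the bipolar theorem give a functional in the testing set of small
  norm that is large on that set of \<open>F\<close>, contradicting the bound on \<open>\<phi>\<close>. The set \<open>D\<close> is
  closed and, by uniform boundedness, bounded, hence complete; the traces on \<open>D\<close> of the uniform
  neighbourhoods of \<open>F\<close> form a Cauchy filter, and its limit is a limit of \<open>F\<close>.
\<close>

section \<open>Sublinear functionals and the Hahn-Banach theorem\<close>

definition sublinear :: "('v::real_vector \<Rightarrow> real) \<Rightarrow> bool" where
  "sublinear p \<longleftrightarrow>
     (\<forall>x y. p (x + y) \<le> p x + p y) \<and> (\<forall>c x. c \<ge> 0 \<longrightarrow> p (c *\<^sub>R x) = c * p x)"

lemma sublinear_add: "sublinear p \<Longrightarrow> p (x + y) \<le> p x + p y"
  unfolding sublinear_def by blast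

lemma sublinear_scaleR: "sublinear p \<Longrightarrow> c \<ge> 0 \<Longrightarrow> p (c *\<^sub>R x) = c * p x"
  unfolding sublinear_def by blast

lemma sublinear_zero: "sublinear p \<Longrightarrow> p 0 = 0"
  using sublinear_scaleR[of p 0 0] by simp

lemma sublinear_neg_le: "sublinear p \<Longrightarrow> - p (- x) \<le> p x"
  using sublinear_add[of p x "- x"] sublinear_zero[of p] by simp

lemma sublinear_divide: "sublinear p \<Longrightarrow> c \<ge> 0 \<Longrightarrow> sublinear (\<lambda>x. p x / c)"
  unfolding sublinear_def by (simp add: add_divide_distrib[symmetric] divide_right_mono)

definition seminorm :: "('v::real_vector \<Rightarrow> real) \<Rightarrow> bool" where
  "seminorm p \<longleftrightarrow> sublinear p \<and> (\<forall>x. p (- x) = p x)"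

lemma seminorm_nonneg: "seminorm p \<Longrightarrow> 0 \<le> p x"
  using sublinear_neg_le[of p x] unfolding seminorm_def by simp

lemma seminorm_divide: "seminorm p \<Longrightarrow> c \<ge> 0 \<Longrightarrow> seminorm (\<lambda>x. p x / c)"
  unfolding seminorm_def by (simp add: sublinear_divide)

lemma sublinear_Inf:
  fixes V :: "'v::real_vector \<Rightarrow> real set"
  assumes ne: "\<And>x. V x \<noteq> {}" and bdd: "\<And>x. bdd_below (V x)"
    and scale: "\<And>c x a. c > 0 \<Longrightarrow> a \<in> V x \<Longrightarrow> c * a \<in> V (c *\<^sub>R x)"
    and add: "\<And>x y a b. a \<in> V x \<Longrightarrow> b \<in> V y \<Longrightarrow> \<exists>d\<in>V (x + y). d \<le> a + b"
  shows "sublinear (\<lambda>x. Inf (V x))"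
proof -
  have lower: "Inf (V x) \<le> a" if "a \<in> V x" for a x
    using cInf_lower[OF that bdd] .
  have scale_le: "Inf (V (c *\<^sub>R x)) \<le> c * Inf (V x)" if c: "c > 0" for c x
  proof -
    have "Inf (V (c *\<^sub>R x)) / c \<le> a" if "a \<in> V x" for a
      using lower[OF scale[OF c that]] c by (simp add: field_simps)
    then have "Inf (V (c *\<^sub>R x)) / c \<le> Inf (V x)"
      by (intro cInf_greatest ne)
    then show ?thesis using c by (simp add: field_simps)
  qed
  have homogeneous: "Inf (V (c *\<^sub>R x)) = c * Inf (V x)" if c: "c > 0" for c x
  proof (rule antisym)
    have "Inf (V x) \<le> inverse c * Inf (V (c *\<^sub>R x))"
      using scale_le[of "inverse c" "c *\<^sub>R x"] c by simp
    then show "c * Inf (V x) \<le> Inf (V (c *\<^sub>R x))"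
      using c by (simp add: field_simps)
  qed (rule scale_le[OF c])
  have "Inf (V 0) = 0"
    using homogeneous[of 2 0] by simp
  show ?thesis
    unfolding sublinear_def
  proof (intro conjI allI impI)
    fix x y
    have "Inf (V (x + y)) \<le> a + b" if "a \<in> V x" "b \<in> V y" for a b
      using add[OF that] lower by (meson order_trans)
    then have "Inf (V (x + y)) - b \<le> Inf (V x)" if "b \<in> V y" for b
      using that by (intro cInf_greatest ne) (simp add: algebra_simps)
    then have "Inf (V (x + y)) - Inf (V x) \<le> Inf (V y)"
      by (intro cInf_greatest ne) (simp add: algebra_simps)
    then show "Inf (V (x + y)) \<le> Inf (V x) + Inf (V y)"
      by simp
  next
    fix c :: real and x
    assume "c \<ge> 0"
    then show "Inf (V (c *\<^sub>R x)) = c * Inf (V x)"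
      using homogeneous \<open>Inf (V 0) = 0\<close> by (cases "c = 0") auto
  qed
qed

text \<open>Hahn-Banach via minimal sublinear functionals: \<open>sublinear_reduction p z\<close> is sublinear
  and below \<open>p\<close>, so it equals \<open>p\<close> when \<open>p\<close> is minimal, and this forces \<open>p\<close> to be additive.\<close>

definition sublinear_reduction :: "('v::real_vector \<Rightarrow> real) \<Rightarrow> 'v \<Rightarrow> 'v \<Rightarrow> real" where
  "sublinear_reduction p z x = Inf ((\<lambda>t. p (x + t *\<^sub>R z) - t * p z) ` {0..})"

lemma bdd_below_sublinear_reduction:
  assumes p: "sublinear p"
  shows "bdd_below ((\<lambda>t. p (x + t *\<^sub>R z) - t * p z) ` {0..})"
proof (rule bdd_belowI2)
  fix t :: real
  assume "t \<in> {0..}"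
  then have "p (t *\<^sub>R z) = t * p z"
    using sublinear_scaleR[OF p] by simp
  moreover have "p (t *\<^sub>R z) \<le> p (x + t *\<^sub>R z) + p (- x)"
    using sublinear_add[OF p, of "x + t *\<^sub>R z" "- x"] by simp
  ultimately show "- p (- x) \<le> p (x + t *\<^sub>R z) - t * p z"
    by simp
qed

lemma sublinear_reduction_le:
  "sublinear p \<Longrightarrow> t \<ge> 0 \<Longrightarrow> sublinear_reduction p z x \<le> p (x + t *\<^sub>R z) - t * p z"
  unfolding sublinear_reduction_def by (intro cInf_lower bdd_below_sublinear_reduction) auto

lemma sublinear_sublinear_reduction:
  assumes p: "sublinear p"
  shows "sublinear (sublinear_reduction p z)"
  unfolding sublinear_reduction_def
proof (rule sublinear_Inf)
  fix c a :: real and x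
  assume "c > 0" "a \<in> (\<lambda>t. p (x + t *\<^sub>R z) - t * p z) ` {0..}"
  then obtain t where t: "t \<ge> 0" and a: "a = p (x + t *\<^sub>R z) - t * p z"
    by auto
  have "p (c *\<^sub>R x + (c * t) *\<^sub>R z) = c * p (x + t *\<^sub>R z)"
    using sublinear_scaleR[OF p, of c "x + t *\<^sub>R z"] \<open>c > 0\<close> by (simp add: algebra_simps)
  then have "c * a = p (c *\<^sub>R x + (c * t) *\<^sub>R z) - (c * t) * p z"
    by (simp add: a algebra_simps)
  then show "c * a \<in> (\<lambda>t. p (c *\<^sub>R x + t *\<^sub>R z) - t * p z) ` {0..}"
    using t \<open>c > 0\<close> by (intro image_eqI[where x = "c * t"]) auto
next
  fix x y a b
  assume "a \<in> (\<lambda>t. p (x + t *\<^sub>R z) - t * p z) ` {0..}"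
    and "b \<in> (\<lambda>t. p (y + t *\<^sub>R z) - t * p z) ` {0..}"
  then obtain s t where st: "s \<ge> 0" "t \<ge> 0"
    and ab: "a = p (x + s *\<^sub>R z) - s * p z" "b = p (y + t *\<^sub>R z) - t * p z"
    by auto
  have "p ((x + y) + (s + t) *\<^sub>R z) \<le> p (x + s *\<^sub>R z) + p (y + t *\<^sub>R z)"
    using sublinear_add[OF p, of "x + s *\<^sub>R z" "y + t *\<^sub>R z"]
    by (simp add: algebra_simps scaleR_add_left)
  then have "p ((x + y) + (s + t) *\<^sub>R z) - (s + t) * p z \<le> a + b"
    using ab by (simp add: algebra_simps)
  moreover have "p ((x + y) + (s + t) *\<^sub>R z) - (s + t) * p z
      \<in> (\<lambda>t. p ((x + y) + t *\<^sub>R z) - t * p z) ` {0..}"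
    using st by (intro imageI) simp
  ultimately show "\<exists>d\<in>(\<lambda>t. p ((x + y) + t *\<^sub>R z) - t * p z) ` {0..}. d \<le> a + b"
    by blast
next
  show "(\<lambda>t. p (x + t *\<^sub>R z) - t * p z) ` {0..} \<noteq> {}" for x
    by auto
qed (rule bdd_below_sublinear_reduction[OF p])

lemma minimal_sublinear_imp_linear:
  assumes p: "sublinear p"
    and minimal: "\<And>q. sublinear q \<Longrightarrow> (\<And>x. q x \<le> p x) \<Longrightarrow> q = p"
  shows "linear p"
proof -
  have add: "p (x + z) = p x + p z" for x z
  proof -
    have "sublinear_reduction p z = p"
      by (rule minimal[OF sublinear_sublinear_reduction[OF p]])
        (use sublinear_reduction_le[OF p, of 0] in simp)
    then have "p x \<le> p (x + z) - p z"
      using sublinear_reduction_le[OF p, of 1 z x] by simp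
    then show ?thesis
      using sublinear_add[OF p, of x z] by simp
  qed
  have neg: "p (- x) = - p x" for x
    using add[of x "- x"] sublinear_zero[OF p] by simp
  have "p (c *\<^sub>R x) = c * p x" for c x
  proof (cases "c \<ge> 0")
    case False
    then have "p (c *\<^sub>R x) = - p ((- c) *\<^sub>R x)"
      using neg[of "(- c) *\<^sub>R x"] by simp
    then show ?thesis
      using sublinear_scaleR[OF p, of "- c" x] False by simp
  qed (use sublinear_scaleR[OF p] in simp)
  then show ?thesis
    using add by (intro linearI) auto
qed

lemma sublinear_Inf_chain:
  assumes "C \<noteq> {}" and sub: "\<And>q. q \<in> C \<Longrightarrow> sublinear q"
    and bdd: "\<And>x. bdd_below ((\<lambda>q. q x) ` C)"
    and chain: "\<And>q1 q2. q1 \<in> C \<Longrightarrow> q2 \<in> C \<Longrightarrow> (\<forall>x. q1 x \<le> q2 x) \<or> (\<forall>x. q2 x \<le> q1 x)"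
  shows "sublinear (\<lambda>x. Inf ((\<lambda>q. q x) ` C))"
proof (rule sublinear_Inf)
  fix x y a b
  assume "a \<in> (\<lambda>q. q x) ` C" "b \<in> (\<lambda>q. q y) ` C"
  then obtain q1 q2 where q: "q1 \<in> C" "q2 \<in> C" "a = q1 x" "b = q2 y"
    by auto
  show "\<exists>d\<in>(\<lambda>q. q (x + y)) ` C. d \<le> a + b"
  proof (cases "\<forall>x. q1 x \<le> q2 x")
    case True
    then have "q1 (x + y) \<le> a + b"
      using sublinear_add[OF sub[OF q(1)], of x y] q(3,4) by (metis add_left_mono order_trans)
    then show ?thesis
      using q(1) by blast
  next
    case False
    then have "q2 x \<le> q1 x"
      using chain[OF q(1,2)] by blast
    then have "q2 (x + y) \<le> a + b"
      using sublinear_add[OF sub[OF q(2)], of x y] q(3,4) by linarith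
    then show ?thesis
      using q(2) by blast
  qed
next
  fix c a :: real and x
  assume "c > 0" "a \<in> (\<lambda>q. q x) ` C"
  then obtain q where "q \<in> C" "a = q x"
    by auto
  moreover have "q (c *\<^sub>R x) = c * q x"
    using sublinear_scaleR[OF sub[OF \<open>q \<in> C\<close>]] \<open>c > 0\<close> by simp
  ultimately show "c * a \<in> (\<lambda>q. q (c *\<^sub>R x)) ` C"
    by (metis image_eqI)
qed (use assms(1) bdd in auto)

lemma sublinear_lower_bound_of_chain:
  assumes p: "sublinear p" and "C \<noteq> {}"
    and sub: "\<And>q. q \<in> C \<Longrightarrow> sublinear q" and le_p: "\<And>q x. q \<in> C \<Longrightarrow> q x \<le> p x"
    and chain: "\<And>q1 q2. q1 \<in> C \<Longrightarrow> q2 \<in> C \<Longrightarrow> (\<forall>x. q1 x \<le> q2 x) \<or> (\<forall>x. q2 x \<le> q1 x)"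
  obtains u where "sublinear u" "\<And>x. u x \<le> p x" "\<And>q x. q \<in> C \<Longrightarrow> u x \<le> q x"
proof -
  have bdd: "bdd_below ((\<lambda>q. q x) ` C)" for x
  proof (rule bdd_belowI2)
    fix q
    assume "q \<in> C"
    then show "- p (- x) \<le> q x"
      using sublinear_neg_le[OF sub, of q x] le_p[of q "- x"] by linarith
  qed
  define u where "u x = Inf ((\<lambda>q. q x) ` C)" for x
  have u_le: "u x \<le> q x" if "q \<in> C" for q x
    unfolding u_def using that bdd by (intro cInf_lower) auto
  moreover have "u x \<le> p x" for x
  proof -
    obtain q where "q \<in> C"
      using \<open>C \<noteq> {}\<close> by blast
    then show ?thesis
      using u_le[of q x] le_p[of q x] by linarith
  qed
  moreover have "sublinear u"
    unfolding u_def using \<open>C \<noteq> {}\<close> sub bdd chain by (rule sublinear_Inf_chain)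
  ultimately show thesis
    using that by blast
qed

lemma exists_minimal_sublinear_below:
  assumes p: "sublinear p"
  obtains q where "sublinear q" "\<And>x. q x \<le> p x"
    and "\<And>q'. sublinear q' \<Longrightarrow> (\<And>x. q' x \<le> q x) \<Longrightarrow> q' = q"
proof -
  define A where "A = {q. sublinear q \<and> (\<forall>x. q x \<le> p x)}"
  define below where "below = (\<lambda>q1 q2 :: 'a \<Rightarrow> real. \<forall>x. q2 x \<le> q1 x)"
  have "partial_order_on A (relation_of below A)"
    unfolding below_def
    by (rule partial_order_on_relation_ofI) (auto intro: order_trans antisym, rule ext, meson antisym)
  moreover have "\<exists>u\<in>A. \<forall>q\<in>C. below q u" if C: "C \<in> Chains (relation_of below A)" for C
  proof (cases "C = {}")
    case True
    then show ?thesis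
      using p unfolding A_def by auto
  next
    case False
    have "C \<subseteq> A" and chain: "\<And>q1 q2. q1 \<in> C \<Longrightarrow> q2 \<in> C \<Longrightarrow> below q1 q2 \<or> below q2 q1"
      using C unfolding Chains_def relation_of_def by auto
    obtain u where "sublinear u" "\<And>x. u x \<le> p x" "\<And>q x. q \<in> C \<Longrightarrow> u x \<le> q x"
    proof (rule sublinear_lower_bound_of_chain[OF p False _ _ _ that])
      show "sublinear q" "q x \<le> p x" if "q \<in> C" for q x
        using \<open>C \<subseteq> A\<close> that unfolding A_def by auto
      show "(\<forall>x. q1 x \<le> q2 x) \<or> (\<forall>x. q2 x \<le> q1 x)" if "q1 \<in> C" "q2 \<in> C" for q1 q2
        using chain[OF that] unfolding below_def by blast
    qed
    then show ?thesis
      unfolding A_def below_def by blast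
  qed
  ultimately obtain m where "m \<in> A" and maximal: "\<And>q. q \<in> A \<Longrightarrow> below m q \<Longrightarrow> q = m"
    using predicate_Zorn[of A below] by blast
  then have m: "sublinear m" "\<And>x. m x \<le> p x"
    unfolding A_def by auto
  show ?thesis
  proof (rule that[OF m])
    fix q
    assume q: "sublinear q" "\<And>x. q x \<le> m x"
    then have "q \<in> A"
      unfolding A_def using m(2) order_trans by blast
    moreover have "below m q"
      unfolding below_def using q(2) by blast
    ultimately show "q = m"
      by (rule maximal)
  qed
qed

theorem hahn_banach_sublinear:
  assumes p: "sublinear p"
  obtains l where "linear l" "\<And>x. l x \<le> p x" "l a = p a"
proof -
  obtain q where q: "sublinear q" "\<And>x. q x \<le> sublinear_reduction p a x"
    and minimal: "\<And>q'. sublinear q' \<Longrightarrow> (\<And>x. q' x \<le> q x) \<Longrightarrow> q' = q"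
    using exists_minimal_sublinear_below[OF sublinear_sublinear_reduction[OF p]] by blast
  have "linear q"
    using q(1) minimal by (rule minimal_sublinear_imp_linear)
  have le_p: "q x \<le> p x" for x
    using q(2)[of x] sublinear_reduction_le[OF p, of 0 a x] by simp
  have "q (- a) \<le> - p a"
    using q(2)[of "- a"] sublinear_reduction_le[OF p, of 1 a "- a"] sublinear_zero[OF p] by simp
  then have "q a = p a"
    using le_p[of a] linear_neg[OF \<open>linear q\<close>, of a] by simp
  then show ?thesis
    using that \<open>linear q\<close> le_p by blast
qed

definition infimal_convolution :: "('v::real_vector \<Rightarrow> real) \<Rightarrow> ('v \<Rightarrow> real) \<Rightarrow> 'v \<Rightarrow> real" where
  "infimal_convolution p q x = Inf (range (\<lambda>w. p (x - w) + q w))"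

lemma infimal_convolution_le:
  assumes "\<And>x. 0 \<le> p x" "\<And>x. 0 \<le> q x"
  shows "infimal_convolution p q x \<le> p (x - w) + q w"
  unfolding infimal_convolution_def
  by (rule cInf_lower) (auto intro!: bdd_belowI2[where m = 0] add_nonneg_nonneg assms)

lemma le_infimal_convolution:
  "(\<And>w. c \<le> p (x - w) + q w) \<Longrightarrow> c \<le> infimal_convolution p q x"
  unfolding infimal_convolution_def by (rule cInf_greatest) auto

lemma sublinear_infimal_convolution:
  assumes p: "sublinear p" and q: "sublinear q" and nonneg: "\<And>x. 0 \<le> p x" "\<And>x. 0 \<le> q x"
  shows "sublinear (infimal_convolution p q)"
  unfolding infimal_convolution_def
proof (rule sublinear_Inf)
  fix c a :: real and x
  assume "c > 0" "a \<in> range (\<lambda>w. p (x - w) + q w)"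
  then obtain w where "a = p (x - w) + q w"
    by auto
  then have "c * a = p (c *\<^sub>R x - c *\<^sub>R w) + q (c *\<^sub>R w)"
    using sublinear_scaleR[OF p, of c "x - w"] sublinear_scaleR[OF q, of c w] \<open>c > 0\<close>
    by (simp add: algebra_simps)
  then show "c * a \<in> range (\<lambda>w. p (c *\<^sub>R x - w) + q w)"
    by blast
next
  fix x y a b
  assume "a \<in> range (\<lambda>w. p (x - w) + q w)" "b \<in> range (\<lambda>w. p (y - w) + q w)"
  then obtain v w where "a = p (x - v) + q v" "b = p (y - w) + q w"
    by auto
  moreover have "p ((x + y) - (v + w)) \<le> p (x - v) + p (y - w)"
    using sublinear_add[OF p, of "x - v" "y - w"] by (simp add: algebra_simps)
  moreover have "q (v + w) \<le> q v + q w"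
    by (rule sublinear_add[OF q])
  ultimately show "\<exists>d\<in>range (\<lambda>w. p (x + y - w) + q w). d \<le> a + b"
    by (intro bexI[of _ "p ((x + y) - (v + w)) + q (v + w)"]) auto
qed (auto intro!: bdd_belowI2[where m = 0] add_nonneg_nonneg nonneg)

lemma hahn_banach_infimal_convolution:
  assumes p: "seminorm p" and q: "seminorm q"
  obtains l where "linear l" "\<And>x. \<bar>l x\<bar> \<le> p x" "\<And>x. \<bar>l x\<bar> \<le> q x"
    "l a = infimal_convolution p q a"
proof -
  have nonneg: "\<And>x. 0 \<le> p x" "\<And>x. 0 \<le> q x"
    using seminorm_nonneg p q by auto
  have sym: "p (- x) = p x" "q (- x) = q x" and "sublinear p" "sublinear q" for x
    using p q unfolding seminorm_def by auto
  then obtain l where l: "linear l" "\<And>x. l x \<le> infimal_convolution p q x"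
    "l a = infimal_convolution p q a"
    using hahn_banach_sublinear[OF sublinear_infimal_convolution[of p q, OF _ _ nonneg]] by blast
  have conv_le: "infimal_convolution p q x \<le> p (x - w) + q w" for x w
    by (rule infimal_convolution_le[of p q, OF nonneg])
  have "l x \<le> p x" "l x \<le> q x" for x
    using l(2)[of x] conv_le[of x 0] conv_le[of x x] sublinear_zero[OF \<open>sublinear p\<close>]
      sublinear_zero[OF \<open>sublinear q\<close>] by auto
  then have "\<bar>l x\<bar> \<le> p x" "\<bar>l x\<bar> \<le> q x" for x
    using linear_neg[OF l(1), of x] sym[of x] by (metis abs_le_iff neg_le_iff_le)+
  then show thesis
    using that l(1,3) by blast
qed

section \<open>The uniform boundedness principle\<close>

lemma Baire_nonempty_interior:
  fixes C :: "nat \<Rightarrow> 'a::complete_space set"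
  assumes "\<And>n. closed (C n)" "(\<Union>n. C n) = UNIV"
  obtains n where "interior (C n) \<noteq> {}"
proof -
  have "euclidean interior_of (\<Union>(range C)) \<noteq> {}"
    using assms(2) by simp
  then show thesis
    using Baire_category_alt[of euclidean "range C"] assms(1) that
    by (auto simp: completely_metrizable_space_euclidean)
qed

lemma norm_blinfun_le_if_bounded_on_ball:
  assumes "d > 0" and bound: "\<And>x. x \<in> ball x0 d \<Longrightarrow> norm (blinfun_apply f x) \<le> M"
  shows "norm f \<le> 4 * M / d"
proof (rule norm_blinfun_bound)
  have "0 \<le> M"
    using bound[of x0] \<open>d > 0\<close> by (meson centre_in_ball norm_ge_zero order_trans)
  then show "0 \<le> 4 * M / d"
    using \<open>d > 0\<close> by simp
  fix h
  show "norm (blinfun_apply f h) \<le> 4 * M / d * norm h"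
  proof (cases "h = 0")
    case False
    define h' where "h' = (d / (2 * norm h)) *\<^sub>R h"
    have "norm h' = d / 2"
      unfolding h'_def using False \<open>d > 0\<close> by simp
    then have "norm (blinfun_apply f (x0 + h')) \<le> M" "norm (blinfun_apply f x0) \<le> M"
      using \<open>d > 0\<close> by (auto intro!: bound simp: dist_norm)
    then have "norm (blinfun_apply f h') \<le> 2 * M"
      using norm_triangle_ineq4[of "blinfun_apply f (x0 + h')" "blinfun_apply f x0"]
      by (simp add: blinfun.add_right)
    then have "d / (2 * norm h) * norm (blinfun_apply f h) \<le> 2 * M"
      unfolding h'_def using \<open>d > 0\<close> by (simp add: blinfun.scaleR_right)
    then show ?thesis
      using False \<open>d > 0\<close> by (simp add: field_simps)
  qed simp
qed

theorem uniform_boundedness: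
  fixes K :: "('a::banach \<Rightarrow>\<^sub>L 'b::real_normed_vector) set"
  assumes "\<And>x. bounded ((\<lambda>f. blinfun_apply f x) ` K)"
  shows "bounded K"
proof -
  define C where "C n = {x. \<forall>f\<in>K. norm (blinfun_apply f x) \<le> real n}" for n
  have "closed (C n)" for n
  proof -
    have "C n = (\<Inter>f\<in>K. {x. norm (blinfun_apply f x) \<le> real n})"
      unfolding C_def by auto
    moreover have "closed {x. norm (blinfun_apply f x) \<le> real n}" for f
      by (intro closed_Collect_le continuous_intros linear_continuous_on blinfun.bounded_linear_right)
    ultimately show ?thesis
      by auto
  qed
  moreover have "x \<in> (\<Union>n. C n)" for x
  proof -
    obtain M where "\<forall>f\<in>K. norm (blinfun_apply f x) \<le> M"
      using assms[of x] unfolding bounded_iff by auto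
    moreover obtain n where "M \<le> real n"
      using real_arch_simple by blast
    ultimately have "x \<in> C n"
      unfolding C_def by (auto intro: order_trans)
    then show ?thesis
      by blast
  qed
  ultimately obtain n where "interior (C n) \<noteq> {}"
    using Baire_nonempty_interior[of C] by blast
  then obtain x0 d where "d > 0" "ball x0 d \<subseteq> C n"
    by (meson equals0I mem_interior)
  then have "norm f \<le> 4 * real n / d" if "f \<in> K" for f
    using that by (intro norm_blinfun_le_if_bounded_on_ball) (auto simp: C_def)
  then show ?thesis
    unfolding bounded_iff by blast
qed

lemma topspace_weak_star [simp]: "topspace weak_star_topology = UNIV"
  unfolding weak_star_topology_def by (auto simp: topology_generated_by_topspace)

lemma openin_weak_star_evaluation:
  "open U \<Longrightarrow> openin weak_star_topology {f. blinfun_apply f x \<in> U}"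
  unfolding weak_star_topology_def by (rule topology_generated_by_Basis) blast

lemma continuous_map_weak_star_evaluation:
  "continuous_map weak_star_topology euclidean (\<lambda>f. blinfun_apply f x)"
  unfolding continuous_map by (auto intro: openin_weak_star_evaluation)

lemma continuous_map_into_weak_star:
  assumes "\<And>x. continuous_map X euclidean (\<lambda>u. blinfun_apply (g u) x)"
  shows "continuous_map X weak_star_topology g"
  unfolding weak_star_topology_def
proof (rule continuous_on_generated_topo)
  fix V :: "('a \<Rightarrow>\<^sub>L real) set"
  assume "V \<in> {{f. blinfun_apply f x \<in> U} | x U. open U}"
  then obtain x U where "V = {f. blinfun_apply f x \<in> U}" "open U"
    by auto
  then show "openin X (g -` V \<inter> topspace X)"
    using openin_continuous_map_preimage[OF assms[of x], of U] by (simp add: vimage_def Int_def conj_commute)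
qed auto

lemma compact_imp_compactin_weak_star:
  fixes K :: "('a::real_normed_vector \<Rightarrow>\<^sub>L real) set"
  assumes "compact K"
  shows "compactin weak_star_topology K"
proof -
  have "continuous_map euclidean weak_star_topology (id :: ('a \<Rightarrow>\<^sub>L real) \<Rightarrow> _)"
    by (intro continuous_map_into_weak_star)
      (simp add: linear_continuous_on blinfun.bounded_linear_left)
  then show ?thesis
    using image_compactin[of euclidean K weak_star_topology id] assms by simp
qed

lemma continuous_map_weak_star_add:
  "continuous_map (prod_topology weak_star_topology weak_star_topology) weak_star_topology
     (\<lambda>(f, g). f + g)"
  by (intro continuous_map_into_weak_star)
    (simp add: case_prod_unfold blinfun.add_left continuous_map_add
      continuous_map_compose[OF continuous_map_fst continuous_map_weak_star_evaluation, unfolded o_def]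
      continuous_map_compose[OF continuous_map_snd continuous_map_weak_star_evaluation, unfolded o_def])

lemma compact_evaluations_if_compactin_weak_star:
  "compactin weak_star_topology K \<Longrightarrow> compact ((\<lambda>f. blinfun_apply f x) ` K)"
  using image_compactin[OF _ continuous_map_weak_star_evaluation] by simp

definition pointwise_bounded :: "('a::real_normed_vector \<Rightarrow>\<^sub>L real) set \<Rightarrow> bool" where
  "pointwise_bounded K \<longleftrightarrow> (\<forall>x. bdd_above ((\<lambda>f. \<bar>blinfun_apply f x\<bar>) ` K))"

lemma sup_seminorm_ge: "pointwise_bounded K \<Longrightarrow> f \<in> K \<Longrightarrow> \<bar>blinfun_apply f x\<bar> \<le> sup_seminorm K x"
  unfolding sup_seminorm_def pointwise_bounded_def by (intro cSUP_upper) auto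

lemma sup_seminorm_le: "K \<noteq> {} \<Longrightarrow> (\<And>f. f \<in> K \<Longrightarrow> \<bar>blinfun_apply f x\<bar> \<le> M) \<Longrightarrow> sup_seminorm K x \<le> M"
  unfolding sup_seminorm_def by (intro cSUP_least) auto

lemma sup_seminorm_nonneg: "K \<noteq> {} \<Longrightarrow> pointwise_bounded K \<Longrightarrow> 0 \<le> sup_seminorm K x"
  using sup_seminorm_ge[of K _ x] by (meson abs_ge_zero ex_in_conv order_trans)

lemma sup_seminorm_mono:
  "K \<subseteq> K' \<Longrightarrow> K \<noteq> {} \<Longrightarrow> pointwise_bounded K' \<Longrightarrow> sup_seminorm K x \<le> sup_seminorm K' x"
  by (rule sup_seminorm_le) (auto intro: sup_seminorm_ge)

lemma sup_seminorm_triangle: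
  assumes "K \<noteq> {}" "pointwise_bounded K"
  shows "sup_seminorm K (x + y) \<le> sup_seminorm K x + sup_seminorm K y"
proof (rule sup_seminorm_le[OF assms(1)])
  fix f
  assume "f \<in> K"
  then have "\<bar>blinfun_apply f x\<bar> \<le> sup_seminorm K x" "\<bar>blinfun_apply f y\<bar> \<le> sup_seminorm K y"
    using sup_seminorm_ge[OF assms(2)] by auto
  then show "\<bar>blinfun_apply f (x + y)\<bar> \<le> sup_seminorm K x + sup_seminorm K y"
    by (simp add: blinfun.add_right)
qed

lemma sup_seminorm_scaleR:
  assumes "K \<noteq> {}" "pointwise_bounded K"
  shows "sup_seminorm K (c *\<^sub>R x) = \<bar>c\<bar> * sup_seminorm K x"
proof -
  have le: "sup_seminorm K (c *\<^sub>R x) \<le> \<bar>c\<bar> * sup_seminorm K x" for c x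
  proof (rule sup_seminorm_le[OF assms(1)])
    fix f
    assume "f \<in> K"
    then show "\<bar>blinfun_apply f (c *\<^sub>R x)\<bar> \<le> \<bar>c\<bar> * sup_seminorm K x"
      using sup_seminorm_ge[OF assms(2)]
      by (simp add: blinfun.scaleR_right abs_mult mult_left_mono)
  qed
  show ?thesis
  proof (cases "c = 0")
    case True
    then show ?thesis
      using le[of 0 x] sup_seminorm_nonneg[OF assms, of 0] by simp
  next
    case False
    then have "sup_seminorm K x \<le> inverse \<bar>c\<bar> * sup_seminorm K (c *\<^sub>R x)"
      using le[of "inverse c" "c *\<^sub>R x"] by (simp add: abs_inverse)
    then have "\<bar>c\<bar> * sup_seminorm K x \<le> sup_seminorm K (c *\<^sub>R x)"
      using False by (simp add: field_simps)
    then show ?thesis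
      using le[of c x] by linarith
  qed
qed

lemma sup_seminorm_zero: "K \<noteq> {} \<Longrightarrow> pointwise_bounded K \<Longrightarrow> sup_seminorm K 0 = 0"
  using sup_seminorm_scaleR[of K 0 0] by simp

lemma sup_seminorm_minus_commute:
  assumes "K \<noteq> {}" "pointwise_bounded K"
  shows "sup_seminorm K (x - y) = sup_seminorm K (y - x)"
  using sup_seminorm_scaleR[OF assms, of "- 1" "x - y"] by simp

lemma sup_seminorm_diff_triangle:
  assumes "K \<noteq> {}" "pointwise_bounded K"
  shows "sup_seminorm K (x - z) \<le> sup_seminorm K (x - y) + sup_seminorm K (y - z)"
  using sup_seminorm_triangle[OF assms, of "x - y" "y - z"] by simp

lemma seminorm_sup_seminorm:
  assumes "K \<noteq> {}" "pointwise_bounded K"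
  shows "seminorm (sup_seminorm K)"
  using sup_seminorm_triangle[OF assms] sup_seminorm_scaleR[OF assms] sup_seminorm_scaleR[OF assms, of "- 1"]
  unfolding seminorm_def sublinear_def by simp

lemma absolutely_convex_scaleR:
  "absolutely_convex K \<Longrightarrow> f \<in> K \<Longrightarrow> \<bar>t\<bar> \<le> 1 \<Longrightarrow> t *\<^sub>R f \<in> K"
  unfolding absolutely_convex_def by (metis abs_zero add.right_neutral scaleR_zero_left)

lemma absolutely_convex_imp_convex: "absolutely_convex K \<Longrightarrow> convex K"
  unfolding absolutely_convex_def convex_def by simp

lemma sup_seminorm_le_if_absolutely_convex:
  assumes "absolutely_convex K" "K \<noteq> {}" and le: "\<And>f. f \<in> K \<Longrightarrow> blinfun_apply f x \<le> c"
  shows "sup_seminorm K x \<le> c"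
proof (rule sup_seminorm_le[OF assms(2)])
  fix f
  assume "f \<in> K"
  moreover have "(- 1) *\<^sub>R f \<in> K"
    using absolutely_convex_scaleR[OF assms(1) \<open>f \<in> K\<close>, of "- 1"] by simp
  ultimately have "blinfun_apply f x \<le> c" "blinfun_apply (- f) x \<le> c"
    using le by auto
  then show "\<bar>blinfun_apply f x\<bar> \<le> c"
    by (simp add: blinfun.minus_left)
qed

section \<open>The bipolar theorem\<close>

lemma finite_separating_points:
  fixes K :: "('a::real_normed_vector \<Rightarrow>\<^sub>L real) set"
  assumes "compactin weak_star_topology K" "\<psi> \<notin> K"
  obtains S where "finite S" "\<And>f. f \<in> K \<Longrightarrow> \<exists>s\<in>S. blinfun_apply f s \<noteq> blinfun_apply \<psi> s"
proof -
  define U where "U s = {f. blinfun_apply f s \<in> - {blinfun_apply \<psi> s}}" for s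
  have "openin weak_star_topology (U s)" for s
    unfolding U_def by (intro openin_weak_star_evaluation open_Compl) simp
  moreover have "K \<subseteq> \<Union>(range U)"
  proof
    fix f
    assume "f \<in> K"
    then obtain s where "blinfun_apply f s \<noteq> blinfun_apply \<psi> s"
      using assms(2) blinfun_eqI by metis
    then show "f \<in> \<Union>(range U)"
      unfolding U_def by auto
  qed
  ultimately obtain \<F> where "finite \<F>" "\<F> \<subseteq> range U" "K \<subseteq> \<Union>\<F>"
    using assms(1) unfolding compactin_def by (metis rangeE)
  then obtain S where "finite S" "K \<subseteq> \<Union>(U ` S)"
    by (metis finite_subset_image)
  then show thesis
    using that unfolding U_def by blast
qed

lemma sum_mult_nonpos_if_sum_squares_minimal:
  fixes a b :: "'i \<Rightarrow> real"
  assumes "\<And>t. 0 < t \<Longrightarrow> t \<le> 1 \<Longrightarrow> (\<Sum>s\<in>S. (a s)\<^sup>2) \<le> (\<Sum>s\<in>S. (a s - t * b s)\<^sup>2)"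
  shows "(\<Sum>s\<in>S. a s * b s) \<le> 0"
proof (rule ccontr)
  define P where "P = (\<Sum>s\<in>S. a s * b s)"
  define B where "B = (\<Sum>s\<in>S. (b s)\<^sup>2)"
  assume "\<not> (\<Sum>s\<in>S. a s * b s) \<le> 0"
  then have "P > 0"
    unfolding P_def by simp
  have "B \<ge> 0"
    unfolding B_def by (simp add: sum_nonneg)
  have expand: "(\<Sum>s\<in>S. (a s - t * b s)\<^sup>2) = (\<Sum>s\<in>S. (a s)\<^sup>2) - 2 * t * P + t\<^sup>2 * B" for t
  proof -
    have "(a s - t * b s)\<^sup>2 = (a s)\<^sup>2 - 2 * t * (a s * b s) + t\<^sup>2 * (b s)\<^sup>2" for s
      by (simp add: power2_eq_square algebra_simps)
    then show ?thesis
      unfolding P_def B_def by (simp add: sum.distrib sum_subtractf sum_distrib_left)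
  qed
  define t where "t = min 1 (P / (B + 1))"
  have "0 < t" "t \<le> 1"
    unfolding t_def using \<open>P > 0\<close> \<open>B \<ge> 0\<close> by auto
  then have "2 * t * P \<le> t\<^sup>2 * B"
    using assms[of t] expand[of t] by simp
  moreover have "t * B \<le> P"
  proof -
    have "t * B \<le> P / (B + 1) * B"
      unfolding t_def using \<open>B \<ge> 0\<close> by (intro mult_right_mono) auto
    also have "\<dots> \<le> P"
      using \<open>P > 0\<close> \<open>B \<ge> 0\<close> by (simp add: field_simps)
    finally show ?thesis .
  qed
  then have "t\<^sup>2 * B \<le> t * P"
    using \<open>0 < t\<close> by (simp add: power2_eq_square mult.assoc mult_left_mono)
  ultimately show False
    using mult_pos_pos[OF \<open>0 < t\<close> \<open>P > 0\<close>] by linarith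
qed

lemma closest_point_separates:
  fixes K :: "('a::real_normed_vector \<Rightarrow>\<^sub>L real) set"
  assumes "convex K" "f0 \<in> K" "f \<in> K"
    and closest: "\<And>g. g \<in> K \<Longrightarrow>
      (\<Sum>s\<in>S. (blinfun_apply \<psi> s - blinfun_apply f0 s)\<^sup>2) \<le> (\<Sum>s\<in>S. (blinfun_apply \<psi> s - blinfun_apply g s)\<^sup>2)"
  shows "(\<Sum>s\<in>S. (blinfun_apply \<psi> s - blinfun_apply f0 s) * blinfun_apply f s)
    \<le> (\<Sum>s\<in>S. (blinfun_apply \<psi> s - blinfun_apply f0 s) * blinfun_apply f0 s)"
proof -
  have "(\<Sum>s\<in>S. (blinfun_apply \<psi> s - blinfun_apply f0 s) * (blinfun_apply f s - blinfun_apply f0 s)) \<le> 0"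
  proof (rule sum_mult_nonpos_if_sum_squares_minimal)
    fix t :: real
    assume "0 < t" "t \<le> 1"
    then have "(1 - t) *\<^sub>R f0 + t *\<^sub>R f \<in> K"
      using assms(1-3) unfolding convex_def by auto
    then have "(\<Sum>s\<in>S. (blinfun_apply \<psi> s - blinfun_apply f0 s)\<^sup>2)
        \<le> (\<Sum>s\<in>S. (blinfun_apply \<psi> s - blinfun_apply ((1 - t) *\<^sub>R f0 + t *\<^sub>R f) s)\<^sup>2)"
      by (rule closest)
    also have "\<dots> = (\<Sum>s\<in>S. (blinfun_apply \<psi> s - blinfun_apply f0 s - t * (blinfun_apply f s - blinfun_apply f0 s))\<^sup>2)"
      by (rule sum.cong[OF refl])
        (simp only: blinfun.add_left blinfun.scaleR_left real_scaleR_def, simp add: algebra_simps)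
    finally show "(\<Sum>s\<in>S. (blinfun_apply \<psi> s - blinfun_apply f0 s)\<^sup>2)
        \<le> (\<Sum>s\<in>S. (blinfun_apply \<psi> s - blinfun_apply f0 s - t * (blinfun_apply f s - blinfun_apply f0 s))\<^sup>2)" .
  qed
  then show ?thesis
    by (simp add: right_diff_distrib sum_subtractf)
qed

theorem weak_star_bipolar:
  fixes K :: "('a::real_normed_vector \<Rightarrow>\<^sub>L real) set"
  assumes K: "absolutely_convex K" "compactin weak_star_topology K" "K \<noteq> {}"
    and dominated: "\<And>x. \<bar>blinfun_apply \<psi> x\<bar> \<le> sup_seminorm K x"
  shows "\<psi> \<in> K"
proof (rule ccontr)
  assume "\<psi> \<notin> K"
  then obtain S where "finite S"
    and separating: "\<And>f. f \<in> K \<Longrightarrow> \<exists>s\<in>S. blinfun_apply f s \<noteq> blinfun_apply \<psi> s"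
    using finite_separating_points K(2) by blast
  define d where "d f = (\<Sum>s\<in>S. (blinfun_apply \<psi> s - blinfun_apply f s)\<^sup>2)" for f
  have d_continuous: "continuous_map weak_star_topology euclidean d"
    unfolding d_def
    by (intro continuous_map_sum \<open>finite S\<close> continuous_map_real_pow continuous_map_diff
        continuous_map_canonical_const continuous_map_weak_star_evaluation)
  then have "compact (d ` K)"
    using image_compactin[OF K(2) d_continuous] by simp
  then obtain f0 where "f0 \<in> K" and closest: "\<And>f. f \<in> K \<Longrightarrow> d f0 \<le> d f"
    using compact_attains_inf[of "d ` K"] K(3) by auto
  \<comment> \<open>evaluation at \<open>x\<close> separates \<open>\<psi>\<close> from \<open>K\<close>: its coefficients are the difference between the
    values of \<open>\<psi>\<close> on \<open>S\<close> and those of the nearest point \<open>f0\<close>\<close>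
  define x where "x = (\<Sum>s\<in>S. (blinfun_apply \<psi> s - blinfun_apply f0 s) *\<^sub>R s)"
  have apply_x: "blinfun_apply f x = (\<Sum>s\<in>S. (blinfun_apply \<psi> s - blinfun_apply f0 s) * blinfun_apply f s)" for f
    unfolding x_def by (simp add: blinfun.sum_right blinfun.scaleR_right)
  have below_f0: "blinfun_apply f x \<le> blinfun_apply f0 x" if "f \<in> K" for f
    unfolding apply_x using absolutely_convex_imp_convex[OF K(1)] \<open>f0 \<in> K\<close> that
    by (rule closest_point_separates) (use closest in \<open>simp add: d_def\<close>)
  have "sup_seminorm K x \<le> blinfun_apply f0 x"
    using K(1,3) below_f0 by (rule sup_seminorm_le_if_absolutely_convex)
  moreover have "blinfun_apply f0 x < blinfun_apply \<psi> x"
  proof -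
    obtain s where "s \<in> S" "blinfun_apply f0 s \<noteq> blinfun_apply \<psi> s"
      using separating[OF \<open>f0 \<in> K\<close>] by blast
    then have "0 < d f0"
      unfolding d_def using \<open>finite S\<close> by (intro sum_pos2[of S s]) auto
    also have "d f0 = blinfun_apply \<psi> x - blinfun_apply f0 x"
      unfolding d_def apply_x sum_subtractf[symmetric] by (simp add: power2_eq_square algebra_simps)
    finally show ?thesis
      by simp
  qed
  ultimately show False
    using dominated[of x] by linarith
qed

lemma mackey_familyD:
  assumes "K \<in> mackey_family Y"
  shows "K \<subseteq> Y" "K \<noteq> {}" "absolutely_convex K" "compactin weak_star_topology K"
  using assms unfolding mackey_family_def by auto

lemma pointwise_bounded_mackey_family:
  assumes "K \<in> mackey_family Y"
  shows "pointwise_bounded K"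
  unfolding pointwise_bounded_def
proof
  fix x
  have "bounded ((\<lambda>f. blinfun_apply f x) ` K)"
    using compact_evaluations_if_compactin_weak_star[OF mackey_familyD(4)[OF assms]]
    by (rule compact_imp_bounded)
  then obtain M where "\<forall>f\<in>K. \<bar>blinfun_apply f x\<bar> \<le> M"
    unfolding bounded_iff by auto
  then show "bdd_above ((\<lambda>f. \<bar>blinfun_apply f x\<bar>) ` K)"
    by (auto intro: bdd_aboveI2)
qed

lemma zero_mem_mackey_family: "K \<in> mackey_family Y \<Longrightarrow> 0 \<in> K"
  using absolutely_convex_scaleR[of K _ 0] mackey_familyD(2,3) by fastforce


definition symmetric_segment :: "'b::real_vector \<Rightarrow> 'b set" where
  "symmetric_segment y = (\<lambda>t. t *\<^sub>R y) ` {-1..1}"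

lemma absolutely_convex_symmetric_segment: "absolutely_convex (symmetric_segment y)"
  unfolding absolutely_convex_def symmetric_segment_def
proof (intro ballI allI impI)
  fix f g and a b :: real
  assume "f \<in> (\<lambda>t. t *\<^sub>R y) ` {-1..1}" "g \<in> (\<lambda>t. t *\<^sub>R y) ` {-1..1}" "\<bar>a\<bar> + \<bar>b\<bar> \<le> 1"
  then obtain s t where st: "f = s *\<^sub>R y" "g = t *\<^sub>R y" "\<bar>s\<bar> \<le> 1" "\<bar>t\<bar> \<le> 1"
    by (auto simp: abs_le_iff simp del: scaleR_cancel_right)
  have "\<bar>a * s + b * t\<bar> \<le> \<bar>a\<bar> * \<bar>s\<bar> + \<bar>b\<bar> * \<bar>t\<bar>"
    by (metis abs_mult abs_triangle_ineq)
  also have "\<dots> \<le> \<bar>a\<bar> + \<bar>b\<bar>"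
    using st(3,4) by (intro add_mono) (auto intro: mult_left_le)
  finally have "a * s + b * t \<in> {-1..1}"
    using \<open>\<bar>a\<bar> + \<bar>b\<bar> \<le> 1\<close> by (simp add: abs_le_iff)
  moreover have "a *\<^sub>R f + b *\<^sub>R g = (a * s + b * t) *\<^sub>R y"
    using st by (simp add: algebra_simps)
  ultimately show "a *\<^sub>R f + b *\<^sub>R g \<in> (\<lambda>t. t *\<^sub>R y) ` {-1..1}"
    by blast
qed

lemma symmetric_segment_in_mackey_family:
  assumes "subspace Y" "y \<in> Y"
  shows "symmetric_segment y \<in> mackey_family Y"
proof -
  have "symmetric_segment y \<subseteq> Y" "symmetric_segment y \<noteq> {}"
    using assms by (auto simp: symmetric_segment_def subspace_scale)
  moreover have "compact (symmetric_segment y)"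
    unfolding symmetric_segment_def by (intro compact_continuous_image continuous_intros) auto
  ultimately show ?thesis
    unfolding mackey_family_def
    by (simp add: absolutely_convex_symmetric_segment compact_imp_compactin_weak_star)
qed

lemma sup_seminorm_symmetric_segment:
  "sup_seminorm (symmetric_segment y) x = \<bar>blinfun_apply y x\<bar>"
proof -
  have le: "\<bar>blinfun_apply (t *\<^sub>R y) x\<bar> \<le> \<bar>blinfun_apply y x\<bar>" if "t \<in> {-1..1}" for t
    using that by (auto simp: blinfun.scaleR_left abs_mult abs_le_iff intro!: mult_left_le_one_le)
  then have "bdd_above ((\<lambda>t. \<bar>blinfun_apply (t *\<^sub>R y) x\<bar>) ` {-1..1})"
    by (intro bdd_aboveI2)
  then show ?thesis
    unfolding sup_seminorm_def symmetric_segment_def image_image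
    using le cSUP_upper[of 1 "{-1..1}" "\<lambda>t. \<bar>blinfun_apply (t *\<^sub>R y) x\<bar>"]
    by (intro antisym cSUP_least) auto
qed

lemma absolutely_convex_set_plus:
  "absolutely_convex K1 \<Longrightarrow> absolutely_convex K2 \<Longrightarrow> absolutely_convex (K1 + K2)"
  unfolding absolutely_convex_def
proof (intro ballI allI impI)
  fix f g and a b :: real
  assume ac: "\<forall>f\<in>K1. \<forall>g\<in>K1. \<forall>a b. \<bar>a\<bar> + \<bar>b\<bar> \<le> 1 \<longrightarrow> a *\<^sub>R f + b *\<^sub>R g \<in> K1"
    "\<forall>f\<in>K2. \<forall>g\<in>K2. \<forall>a b. \<bar>a\<bar> + \<bar>b\<bar> \<le> 1 \<longrightarrow> a *\<^sub>R f + b *\<^sub>R g \<in> K2"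
    and "f \<in> K1 + K2" "g \<in> K1 + K2" "\<bar>a\<bar> + \<bar>b\<bar> \<le> 1"
  then obtain f1 f2 g1 g2 where "f = f1 + f2" "g = g1 + g2" "f1 \<in> K1" "g1 \<in> K1" "f2 \<in> K2" "g2 \<in> K2"
    by (meson set_plus_elim)
  then have "a *\<^sub>R f + b *\<^sub>R g = (a *\<^sub>R f1 + b *\<^sub>R g1) + (a *\<^sub>R f2 + b *\<^sub>R g2)"
    "a *\<^sub>R f1 + b *\<^sub>R g1 \<in> K1" "a *\<^sub>R f2 + b *\<^sub>R g2 \<in> K2"
    using ac \<open>\<bar>a\<bar> + \<bar>b\<bar> \<le> 1\<close> by (auto simp: algebra_simps)
  then show "a *\<^sub>R f + b *\<^sub>R g \<in> K1 + K2"
    by (simp add: set_plus_intro)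
qed

lemma set_plus_in_mackey_family:
  assumes Y: "subspace Y" and K1: "K1 \<in> mackey_family Y" and K2: "K2 \<in> mackey_family Y"
  shows "K1 + K2 \<in> mackey_family Y"
proof -
  have "compactin (prod_topology weak_star_topology weak_star_topology) (K1 \<times> K2)"
    using mackey_familyD(4)[OF K1] mackey_familyD(4)[OF K2] by (simp add: compactin_Times)
  then have "compactin weak_star_topology ((\<lambda>(f, g). f + g) ` (K1 \<times> K2))"
    by (rule image_compactin[OF _ continuous_map_weak_star_add])
  moreover have "(\<lambda>(f, g). f + g) ` (K1 \<times> K2) = K1 + K2"
    by (auto simp: set_plus_def)
  moreover have "K1 + K2 \<subseteq> Y"
  proof
    fix h
    assume "h \<in> K1 + K2"
    then obtain f g where "h = f + g" "f \<in> K1" "g \<in> K2"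
      by (rule set_plus_elim)
    then show "h \<in> Y"
      using mackey_familyD(1)[OF K1] mackey_familyD(1)[OF K2] subspace_add[OF Y] by blast
  qed
  moreover have "K1 + K2 \<noteq> {}"
  proof -
    obtain f g where "f \<in> K1" "g \<in> K2"
      using mackey_familyD(2)[OF K1] mackey_familyD(2)[OF K2] by blast
    then show ?thesis
      using set_plus_intro[of f K1 g K2] by blast
  qed
  moreover have "absolutely_convex (K1 + K2)"
    using mackey_familyD(3)[OF K1] mackey_familyD(3)[OF K2] by (rule absolutely_convex_set_plus)
  ultimately show ?thesis
    unfolding mackey_family_def by (metis (mono_tags, lifting) mem_Collect_eq)
qed

lemma mackey_family_directed:
  assumes "subspace Y" "K1 \<in> mackey_family Y" "K2 \<in> mackey_family Y"
  obtains K where "K \<in> mackey_family Y"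
    "\<And>x. sup_seminorm K1 x \<le> sup_seminorm K x" "\<And>x. sup_seminorm K2 x \<le> sup_seminorm K x"
proof
  show K: "K1 + K2 \<in> mackey_family Y"
    using assms by (rule set_plus_in_mackey_family)
  have "K1 \<subseteq> K1 + K2" "K2 \<subseteq> K1 + K2"
    using zero_mem_mackey_family[OF assms(2)] zero_mem_mackey_family[OF assms(3)]
      set_plus_intro[of _ K1 0 K2] set_plus_intro[of 0 K1 _ K2] by auto
  then show "sup_seminorm K1 x \<le> sup_seminorm (K1 + K2) x" "sup_seminorm K2 x \<le> sup_seminorm (K1 + K2) x"
    for x
    using mackey_familyD(2) assms(2,3) pointwise_bounded_mackey_family[OF K]
    by (blast intro: sup_seminorm_mono)+
qed

definition series_combinations :: "(nat \<Rightarrow> 'b::banach) \<Rightarrow> 'b set" where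
  "series_combinations z = (\<lambda>a. \<Sum>n. a n *\<^sub>R z n) ` (UNIV \<rightarrow>\<^sub>E {-1..1})"

lemma summable_series_combination:
  fixes z :: "nat \<Rightarrow> 'b::banach"
  assumes "summable (\<lambda>n. norm (z n))" "a \<in> (UNIV \<rightarrow>\<^sub>E {-1..1})"
  shows "summable (\<lambda>n. a n *\<^sub>R z n)"
proof (rule summable_comparison_test'[OF assms(1)])
  fix n
  have "\<bar>a n\<bar> \<le> 1"
    using assms(2) by (auto simp: abs_le_iff)
  then show "norm (a n *\<^sub>R z n) \<le> norm (z n)"
    by (simp add: mult_left_le_one_le)
qed

lemma compact_series_combinations:
  fixes z :: "nat \<Rightarrow> 'b::banach"
  assumes z: "summable (\<lambda>n. norm (z n))"
  shows "compact (series_combinations z)"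
proof -
  have "uniform_limit (UNIV \<rightarrow>\<^sub>E {-1..1})
      (\<lambda>N a. \<Sum>n<N. a n *\<^sub>R z n) (\<lambda>a. \<Sum>n. a n *\<^sub>R z n) sequentially"
  proof (rule Weierstrass_m_test[OF _ z])
    fix n and a :: "nat \<Rightarrow> real"
    assume "a \<in> UNIV \<rightarrow>\<^sub>E {-1..1}"
    then have "\<bar>a n\<bar> \<le> 1"
      by (auto simp: abs_le_iff)
    then show "norm (a n *\<^sub>R z n) \<le> norm (z n)"
      by (simp add: mult_left_le_one_le)
  qed
  moreover have "continuous_on (UNIV \<rightarrow>\<^sub>E {-1..1}) (\<lambda>a. \<Sum>n<N. a n *\<^sub>R z n)" for N
    by (intro continuous_intros continuous_on_subset[OF continuous_on_product_coordinates]) auto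
  ultimately have "continuous_on (UNIV \<rightarrow>\<^sub>E {-1..1}) (\<lambda>a. \<Sum>n. a n *\<^sub>R z n)"
    by (intro uniform_limit_theorem) auto
  moreover have "compact (UNIV \<rightarrow>\<^sub>E {-1..1::real} :: (nat \<Rightarrow> real) set)"
    using compactin_PiE[of "\<lambda>_. euclidean" "UNIV :: nat set" "\<lambda>_. {-1..1::real}"]
    by (simp add: euclidean_product_topology)
  ultimately show ?thesis
    unfolding series_combinations_def by (intro compact_continuous_image)
qed

lemma absolutely_convex_series_combinations:
  fixes z :: "nat \<Rightarrow> 'b::banach"
  assumes z: "summable (\<lambda>n. norm (z n))"
  shows "absolutely_convex (series_combinations z)"
  unfolding absolutely_convex_def series_combinations_def
proof (intro ballI allI impI)
  fix f g and c d :: real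
  assume "f \<in> (\<lambda>a. \<Sum>n. a n *\<^sub>R z n) ` (UNIV \<rightarrow>\<^sub>E {-1..1})"
    "g \<in> (\<lambda>a. \<Sum>n. a n *\<^sub>R z n) ` (UNIV \<rightarrow>\<^sub>E {-1..1})" and cd: "\<bar>c\<bar> + \<bar>d\<bar> \<le> 1"
  then obtain a b where ab: "a \<in> (UNIV \<rightarrow>\<^sub>E {-1..1})" "b \<in> (UNIV \<rightarrow>\<^sub>E {-1..1})"
    and "f = (\<Sum>n. a n *\<^sub>R z n)" "g = (\<Sum>n. b n *\<^sub>R z n)"
    by auto
  then have "(\<lambda>n. a n *\<^sub>R z n) sums f" "(\<lambda>n. b n *\<^sub>R z n) sums g"
    using summable_series_combination[OF z] by (simp_all add: summable_sums)
  then have "(\<lambda>n. c *\<^sub>R (a n *\<^sub>R z n) + d *\<^sub>R (b n *\<^sub>R z n)) sums (c *\<^sub>R f + d *\<^sub>R g)"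
    by (intro sums_add sums_scaleR_right)
  then have "(\<lambda>n. (c * a n + d * b n) *\<^sub>R z n) sums (c *\<^sub>R f + d *\<^sub>R g)"
    by (simp add: algebra_simps)
  moreover have "c * a n + d * b n \<in> {-1..1}" for n
  proof -
    have "\<bar>c * a n + d * b n\<bar> \<le> \<bar>c\<bar> * \<bar>a n\<bar> + \<bar>d\<bar> * \<bar>b n\<bar>"
      by (metis abs_mult abs_triangle_ineq)
    also have "\<dots> \<le> \<bar>c\<bar> + \<bar>d\<bar>"
      using ab by (intro add_mono mult_left_le) (auto simp: abs_le_iff)
    finally show ?thesis
      using cd by (simp add: abs_le_iff)
  qed
  ultimately show "c *\<^sub>R f + d *\<^sub>R g \<in> (\<lambda>a. \<Sum>n. a n *\<^sub>R z n) ` (UNIV \<rightarrow>\<^sub>E {-1..1})"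
    by (intro image_eqI[where x = "\<lambda>n. c * a n + d * b n"]) (auto simp: sums_iff)
qed

lemma mem_series_combinations: "z n \<in> series_combinations z"
proof -
  have "(\<lambda>m. (if m = n then 1 else 0) *\<^sub>R z m) sums z n"
  proof -
    have "(\<lambda>m. (if m = n then 1 else 0) *\<^sub>R z m) = (\<lambda>m. if m = n then z m else 0)"
      by (simp add: fun_eq_iff)
    then show ?thesis
      using sums_single[of n z] by simp
  qed
  then show ?thesis
    unfolding series_combinations_def
    by (intro image_eqI[where x = "\<lambda>m. if m = n then 1 else 0"]) (auto simp: sums_iff)
qed

lemma series_combinations_in_mackey_family:
  assumes Y: "subspace Y" "closed Y" and z: "\<And>n. z n \<in> Y" "summable (\<lambda>n. norm (z n))"
  shows "series_combinations z \<in> mackey_family Y"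
proof -
  have "series_combinations z \<subseteq> Y"
  proof
    fix f
    assume "f \<in> series_combinations z"
    then obtain a where a: "a \<in> (UNIV \<rightarrow>\<^sub>E {-1..1})" "f = (\<Sum>n. a n *\<^sub>R z n)"
      unfolding series_combinations_def by auto
    then have "(\<lambda>N. \<Sum>n<N. a n *\<^sub>R z n) \<longlonglongrightarrow> f"
      using summable_series_combination[OF z(2)] by (simp add: summable_LIMSEQ)
    moreover have "(\<Sum>n<N. a n *\<^sub>R z n) \<in> Y" for N
      using Y(1) z(1) by (intro subspace_sum subspace_scale) auto
    ultimately show "f \<in> Y"
      using closed_sequentially[OF Y(2), of "\<lambda>N. \<Sum>n<N. a n *\<^sub>R z n"] by blast
  qed
  then show ?thesis
    unfolding mackey_family_def
    using mem_series_combinations absolutely_convex_series_combinations[OF z(2)]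
      compact_imp_compactin_weak_star[OF compact_series_combinations[OF z(2)]]
    by blast
qed

lemma bounded_mackey_family:
  fixes Y :: "('a::banach \<Rightarrow>\<^sub>L real) set"
  assumes "K \<in> mackey_family Y"
  shows "bounded K"
  using compact_evaluations_if_compactin_weak_star[OF mackey_familyD(4)[OF assms]]
  by (intro uniform_boundedness compact_imp_bounded)

definition mackey_ball :: "('a::real_normed_vector \<Rightarrow>\<^sub>L real) set \<Rightarrow> 'a \<Rightarrow> real \<Rightarrow> 'a set" where
  "mackey_ball K x0 e = {x. sup_seminorm K (x - x0) < e}"

lemma openin_mackey_ball: "K \<in> mackey_family Y \<Longrightarrow> openin (mackey_topology Y) (mackey_ball K x0 e)"
  unfolding mackey_topology_def mackey_ball_def by (rule topology_generated_by_Basis) blast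

lemma centre_in_mackey_ball:
  assumes "K \<in> mackey_family Y" "e > 0"
  shows "x0 \<in> mackey_ball K x0 e"
  unfolding mackey_ball_def
  using sup_seminorm_zero[OF mackey_familyD(2)[OF assms(1)] pointwise_bounded_mackey_family[OF assms(1)]]
    assms(2) by simp

lemma topspace_mackey_topology:
  fixes Y :: "('a::real_normed_vector \<Rightarrow>\<^sub>L real) set"
  assumes "subspace Y"
  shows "topspace (mackey_topology Y) = UNIV"
proof -
  have K: "symmetric_segment 0 \<in> mackey_family Y"
    using assms by (intro symmetric_segment_in_mackey_family subspace_0)
  have "x \<in> topspace (mackey_topology Y)" for x :: 'a
    using openin_subset[OF openin_mackey_ball[OF K]] centre_in_mackey_ball[OF K, of 1 x] by auto
  then show ?thesis
    by auto
qed

lemma mackey_ball_subset_mackey_ball: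
  assumes K: "K \<in> mackey_family Y" and "x \<in> mackey_ball K x0 e"
  shows "mackey_ball K x (e - sup_seminorm K (x - x0)) \<subseteq> mackey_ball K x0 e"
proof
  fix z
  assume "z \<in> mackey_ball K x (e - sup_seminorm K (x - x0))"
  moreover have "sup_seminorm K (z - x0) \<le> sup_seminorm K (z - x) + sup_seminorm K (x - x0)"
    using mackey_familyD(2)[OF K] pointwise_bounded_mackey_family[OF K] by (rule sup_seminorm_diff_triangle)
  ultimately show "z \<in> mackey_ball K x0 e"
    unfolding mackey_ball_def by simp
qed

lemma mackey_ball_Int:
  assumes "subspace Y" "K1 \<in> mackey_family Y" "K2 \<in> mackey_family Y"
  obtains K where "K \<in> mackey_family Y"
    "\<And>x. mackey_ball K x (min e1 e2) \<subseteq> mackey_ball K1 x e1 \<inter> mackey_ball K2 x e2"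
proof -
  obtain K where "K \<in> mackey_family Y"
    and le: "\<And>x. sup_seminorm K1 x \<le> sup_seminorm K x" "\<And>x. sup_seminorm K2 x \<le> sup_seminorm K x"
    using mackey_family_directed[OF assms] by blast
  moreover have "mackey_ball K x (min e1 e2) \<subseteq> mackey_ball K1 x e1 \<inter> mackey_ball K2 x e2" for x
    using le[of "_ - x"] unfolding mackey_ball_def by (auto intro: le_less_trans)
  ultimately show thesis
    using that by blast
qed

lemma openin_mackey_topology_imp_ball:
  assumes Y: "subspace Y" and "openin (mackey_topology Y) U" "x \<in> U"
  obtains K e where "K \<in> mackey_family Y" "e > 0" "mackey_ball K x e \<subseteq> U"
proof -
  have "generate_topology_on {{x. sup_seminorm K (x - x0) < e} | K x0 e. K \<in> mackey_family Y} U"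
    using assms(2) unfolding mackey_topology_def by (rule openin_topology_generated_by)
  then have "\<exists>K\<in>mackey_family Y. \<exists>e>0. mackey_ball K x e \<subseteq> U"
    using \<open>x \<in> U\<close>
  proof (induction arbitrary: x)
    case (Int U1 U2)
    then obtain K1 e1 K2 e2 where K12: "K1 \<in> mackey_family Y" "e1 > 0" "mackey_ball K1 x e1 \<subseteq> U1"
      "K2 \<in> mackey_family Y" "e2 > 0" "mackey_ball K2 x e2 \<subseteq> U2"
      by (meson IntD1 IntD2)
    obtain K where "K \<in> mackey_family Y"
      and balls: "\<And>z. mackey_ball K z (min e1 e2) \<subseteq> mackey_ball K1 z e1 \<inter> mackey_ball K2 z e2"
      using mackey_ball_Int[OF Y K12(1,4), of e1 e2] by blast
    have "mackey_ball K x (min e1 e2) \<subseteq> U1 \<inter> U2"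
      using balls[of x] K12(3,6) by blast
    then show ?case
      using \<open>K \<in> mackey_family Y\<close> K12(2,5) by (intro bexI[of _ K] exI[of _ "min e1 e2"]) auto
  next
    case (UN \<U>)
    then show ?case
      by blast
  next
    case (Basis V)
    then obtain K x0 e where V: "V = mackey_ball K x0 e" "K \<in> mackey_family Y"
      unfolding mackey_ball_def by blast
    then have "mackey_ball K x (e - sup_seminorm K (x - x0)) \<subseteq> V"
      using Basis.prems by (simp add: mackey_ball_subset_mackey_ball)
    moreover have "e - sup_seminorm K (x - x0) > 0"
      using Basis.prems unfolding V(1) mackey_ball_def by simp
    ultimately show ?case
      using V(2) by blast
  qed simp
  then show thesis
    using that by blast
qed

lemma mackey_converges_in_closedin:
  assumes Y: "subspace Y" and conv: "mackey_converges Y F x0"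
    and B: "closedin (mackey_topology Y) B" "eventually (\<lambda>x. x \<in> B) F" and "F \<noteq> bot"
  shows "x0 \<in> B"
proof (rule ccontr)
  assume "x0 \<notin> B"
  moreover have "openin (mackey_topology Y) (- B)"
    using B(1) topspace_mackey_topology[OF Y] by (simp add: closedin_def Compl_eq_Diff_UNIV)
  ultimately obtain K e where "K \<in> mackey_family Y" "e > 0" "mackey_ball K x0 e \<subseteq> - B"
    using openin_mackey_topology_imp_ball[OF Y] by blast
  moreover have "eventually (\<lambda>x. sup_seminorm K (x - x0) < e) F"
    using conv \<open>K \<in> mackey_family Y\<close> \<open>e > 0\<close> unfolding mackey_converges_def by blast
  ultimately have "eventually (\<lambda>x. x \<notin> B) F"
    by (auto elim!: eventually_mono simp: mackey_ball_def)
  with B(2) have "eventually (\<lambda>x. False) F"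
    by eventually_elim simp
  with \<open>F \<noteq> bot\<close> show False
    by simp
qed

theorem mackey_complete_imp_quasi_complete:
  assumes "subspace Y" "mackey_complete Y"
  shows "mackey_quasi_complete Y"
  unfolding mackey_quasi_complete_def mackey_complete_set_def
proof (intro allI impI)
  fix B F
  assume B: "mackey_bounded Y B \<and> closedin (mackey_topology Y) B"
    and F: "mackey_cauchy Y F \<and> eventually (\<lambda>x. x \<in> B) F"
  then obtain x0 where "mackey_converges Y F x0"
    using assms(2) unfolding mackey_complete_def mackey_complete_set_def by auto
  moreover have "F \<noteq> bot"
    using F unfolding mackey_cauchy_def by blast
  ultimately show "\<exists>x0\<in>B. mackey_converges Y F x0"
    using mackey_converges_in_closedin[OF assms(1)] B F by blast
qed

section \<open>The limit functional of a Cauchy filter\<close>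

lemma rescale_to_small_norm:
  fixes \<phi> :: "'b::real_normed_vector \<Rightarrow> real"
  assumes Y: "subspace Y" and scale: "\<And>c y. y \<in> Y \<Longrightarrow> \<phi> (c *\<^sub>R y) = c * \<phi> y"
    and "y \<in> Y" "c > 0" "c * c * norm y < \<bar>\<phi> y\<bar>"
  obtains z where "z \<in> Y" "norm z = 1 / c" "c < \<bar>\<phi> z\<bar>"
proof -
  have "y \<noteq> 0"
    using assms(5) scale[OF \<open>y \<in> Y\<close>, of 0] by auto
  define z where "z = (1 / (c * norm y)) *\<^sub>R y"
  have "z \<in> Y"
    unfolding z_def using Y \<open>y \<in> Y\<close> by (rule subspace_scale)
  moreover have "norm z = 1 / c"
    unfolding z_def using \<open>y \<noteq> 0\<close> \<open>c > 0\<close> by simp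
  moreover have "c < \<bar>\<phi> z\<bar>"
  proof -
    have pos: "0 < c * norm y"
      using \<open>c > 0\<close> \<open>y \<noteq> 0\<close> by simp
    have "\<bar>\<phi> y\<bar> = (c * norm y) * \<bar>\<phi> z\<bar>"
      unfolding z_def using scale[OF \<open>y \<in> Y\<close>] \<open>c > 0\<close> \<open>y \<noteq> 0\<close> by (simp add: abs_mult)
    then have "(c * norm y) * c < (c * norm y) * \<bar>\<phi> z\<bar>"
      using assms(5) by (simp add: algebra_simps)
    then show ?thesis
      using pos mult_less_cancel_left_pos by blast
  qed
  ultimately show thesis
    using that by blast
qed

lemma bounded_if_bounded_on_summable_sequences:
  fixes \<phi> :: "'b::real_normed_vector \<Rightarrow> real"
  assumes Y: "subspace Y" and scale: "\<And>c y. y \<in> Y \<Longrightarrow> \<phi> (c *\<^sub>R y) = c * \<phi> y"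
    and bdd: "\<And>z. (\<And>n. z n \<in> Y) \<Longrightarrow> summable (\<lambda>n. norm (z n)) \<Longrightarrow> bdd_above (range (\<lambda>n. \<bar>\<phi> (z n)\<bar>))"
  obtains r where "r \<ge> 0" "\<And>y. y \<in> Y \<Longrightarrow> \<bar>\<phi> y\<bar> \<le> r * norm y"
proof (rule ccontr)
  assume "\<not> thesis"
  then have "\<exists>y\<in>Y. 2 ^ n * 2 ^ n * norm y < \<bar>\<phi> y\<bar>" for n :: nat
    using that by (metis not_le zero_le_numeral zero_le_power mult_nonneg_nonneg)
  then have "\<exists>z\<in>Y. norm z = 1 / 2 ^ n \<and> 2 ^ n < \<bar>\<phi> z\<bar>" for n :: nat
    using rescale_to_small_norm[OF Y scale] by (metis zero_less_numeral zero_less_power)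
  then obtain z where z: "\<And>n. z n \<in> Y" "\<And>n. norm (z n) = 1 / 2 ^ n" "\<And>n. 2 ^ n < \<bar>\<phi> (z n)\<bar>"
    by metis
  have "summable (\<lambda>n. norm (z n))"
    unfolding z(2) by (simp add: summable_geometric power_one_over[symmetric])
  then have "bdd_above (range (\<lambda>n. \<bar>\<phi> (z n)\<bar>))"
    by (rule bdd[OF z(1)])
  then obtain M where M: "\<And>n. \<bar>\<phi> (z n)\<bar> \<le> M"
    unfolding bdd_above_def by auto
  obtain n where "M < 2 ^ n"
    using real_arch_pow[of 2 M] by auto
  then show False
    using M[of n] z(3)[of n] by simp
qed

lemma mackey_cauchyE:
  assumes "mackey_cauchy Y F" "K \<in> mackey_family Y" "e > 0"
  obtains A where "eventually (\<lambda>x. x \<in> A) F" "\<And>x y. x \<in> A \<Longrightarrow> y \<in> A \<Longrightarrow> sup_seminorm K (x - y) < e"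
  using assms unfolding mackey_cauchy_def by blast

lemma mackey_cauchy_nontrivial: "mackey_cauchy Y F \<Longrightarrow> F \<noteq> bot"
  unfolding mackey_cauchy_def by blast

definition limit_functional :: "'a filter \<Rightarrow> ('a::real_normed_vector \<Rightarrow>\<^sub>L real) \<Rightarrow> real" where
  "limit_functional F y = Lim F (\<lambda>x. blinfun_apply y x)"

lemma tendsto_limit_functional:
  assumes F: "mackey_cauchy Y F" and Y: "subspace Y" and y: "y \<in> Y"
  shows "((\<lambda>x. blinfun_apply y x) \<longlongrightarrow> limit_functional F y) F"
proof -
  have K: "symmetric_segment y \<in> mackey_family Y"
    using Y y by (rule symmetric_segment_in_mackey_family)
  have cauchy: "cauchy_filter (filtermap (\<lambda>x. blinfun_apply y x) F)"
    unfolding cauchy_filter_metric_filtermap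
  proof (intro allI impI)
    fix e :: real
    assume "e > 0"
    then obtain A where "eventually (\<lambda>x. x \<in> A) F"
      and "\<And>x x'. x \<in> A \<Longrightarrow> x' \<in> A \<Longrightarrow> sup_seminorm (symmetric_segment y) (x - x') < e"
      using mackey_cauchyE[OF F K] by blast
    then show "\<exists>P. eventually P F \<and> (\<forall>x x'. P x \<and> P x' \<longrightarrow> dist (blinfun_apply y x) (blinfun_apply y x') < e)"
      by (auto simp: sup_seminorm_symmetric_segment dist_real_def blinfun.diff_right)
  qed
  moreover have "filtermap (\<lambda>x. blinfun_apply y x) F \<noteq> bot"
    using mackey_cauchy_nontrivial[OF F] by (simp add: filtermap_bot_iff)
  ultimately have "\<exists>c. filtermap (\<lambda>x. blinfun_apply y x) F \<le> nhds c"
    by (intro cauchy_filter_complete_converges[OF cauchy complete_UNIV]) simp_all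
  then obtain c where "((\<lambda>x. blinfun_apply y x) \<longlongrightarrow> c) F"
    unfolding filterlim_def by blast
  then show ?thesis
    unfolding limit_functional_def using mackey_cauchy_nontrivial[OF F] by (simp add: tendsto_Lim)
qed

lemma limit_functional_scaleR:
  assumes F: "mackey_cauchy Y F" and Y: "subspace Y" and y: "y \<in> Y"
  shows "limit_functional F (c *\<^sub>R y) = c * limit_functional F y"
proof -
  have "((\<lambda>x. blinfun_apply (c *\<^sub>R y) x) \<longlongrightarrow> c * limit_functional F y) F"
    unfolding blinfun.scaleR_left real_scaleR_def by (intro tendsto_intros tendsto_limit_functional[OF F Y y])
  with tendsto_limit_functional[OF F Y subspace_scale[OF Y y]] show ?thesis
    using mackey_cauchy_nontrivial[OF F] by (rule tendsto_unique[rotated])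
qed

lemma limit_functional_near:
  assumes F: "mackey_cauchy Y F" and Y: "subspace Y" and K: "K \<in> mackey_family Y" and "y \<in> K"
    and A: "eventually (\<lambda>x. x \<in> A) F" "\<And>x x'. x \<in> A \<Longrightarrow> x' \<in> A \<Longrightarrow> sup_seminorm K (x - x') < e"
    and "a \<in> A"
  shows "\<bar>limit_functional F y - blinfun_apply y a\<bar> \<le> e"
proof -
  have "y \<in> Y"
    using K \<open>y \<in> K\<close> mackey_familyD(1) by blast
  have "((\<lambda>x. \<bar>blinfun_apply y x - blinfun_apply y a\<bar>) \<longlongrightarrow> \<bar>limit_functional F y - blinfun_apply y a\<bar>) F"
    by (intro tendsto_intros tendsto_limit_functional[OF F Y \<open>y \<in> Y\<close>])
  moreover have "eventually (\<lambda>x. \<bar>blinfun_apply y x - blinfun_apply y a\<bar> \<le> e) F"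
  proof (rule eventually_mono[OF A(1)])
    fix x
    assume "x \<in> A"
    have "\<bar>blinfun_apply y (x - a)\<bar> \<le> sup_seminorm K (x - a)"
      using pointwise_bounded_mackey_family[OF K] \<open>y \<in> K\<close> by (rule sup_seminorm_ge)
    also have "\<dots> < e"
      using A(2) \<open>x \<in> A\<close> \<open>a \<in> A\<close> by blast
    finally show "\<bar>blinfun_apply y x - blinfun_apply y a\<bar> \<le> e"
      by (simp add: blinfun.diff_right)
  qed
  ultimately show ?thesis
    using mackey_cauchy_nontrivial[OF F] by (intro tendsto_upperbound) auto
qed

lemma limit_functional_bounded:
  fixes Y :: "('a::real_normed_vector \<Rightarrow>\<^sub>L real) set"
  assumes Y: "subspace Y" "closed Y" and F: "mackey_cauchy Y F"
  obtains r where "r \<ge> 0" "\<And>y. y \<in> Y \<Longrightarrow> \<bar>limit_functional F y\<bar> \<le> r * norm y"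
proof (rule bounded_if_bounded_on_summable_sequences[OF Y(1) _ _ that])
  show "limit_functional F (c *\<^sub>R y) = c * limit_functional F y" if "y \<in> Y" for c y
    using F Y(1) that by (rule limit_functional_scaleR)
next
  fix z
  assume z: "\<And>n. z n \<in> Y" "summable (\<lambda>n. norm (z n))"
  define K where "K = series_combinations z"
  have K: "K \<in> mackey_family Y"
    unfolding K_def using Y z by (rule series_combinations_in_mackey_family)
  then obtain A where A: "eventually (\<lambda>x. x \<in> A) F" "\<And>x x'. x \<in> A \<Longrightarrow> x' \<in> A \<Longrightarrow> sup_seminorm K (x - x') < 1"
    using mackey_cauchyE[OF F K zero_less_one] by blast
  obtain a where "a \<in> A"
    using eventually_happens[OF A(1)] mackey_cauchy_nontrivial[OF F] by auto
  have bound: "\<bar>limit_functional F (z n)\<bar> \<le> 1 + sup_seminorm K a" for n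
  proof -
    have "z n \<in> K"
      unfolding K_def by (rule mem_series_combinations)
    then have "\<bar>limit_functional F (z n) - blinfun_apply (z n) a\<bar> \<le> 1"
      "\<bar>blinfun_apply (z n) a\<bar> \<le> sup_seminorm K a"
      using limit_functional_near[OF F Y(1) K _ A \<open>a \<in> A\<close>] sup_seminorm_ge[OF pointwise_bounded_mackey_family[OF K]]
      by auto
    then show ?thesis
      by linarith
  qed
  then show "bdd_above (range (\<lambda>n. \<bar>limit_functional F (z n)\<bar>))"
    by (rule bdd_aboveI2[where M = "1 + sup_seminorm K a"])
qed

lemma bounded_linear_functional_imp_blinfun:
  fixes l :: "'a::real_normed_vector \<Rightarrow> real"
  assumes "linear l" "C \<ge> 0" "\<And>x. \<bar>l x\<bar> \<le> C * norm x"
  obtains \<psi> where "\<And>x. blinfun_apply \<psi> x = l x" "norm \<psi> \<le> C"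
proof -
  have "bounded_linear l"
    using assms by (intro bounded_linear_intro[where K = C]) (auto simp: linear_add linear_scale mult.commute)
  then obtain \<psi> where \<psi>: "\<And>x. blinfun_apply \<psi> x = l x"
    using bounded_linear_Blinfun_apply by metis
  moreover have "norm \<psi> \<le> C"
    using assms(2,3) \<psi> by (intro norm_blinfun_bound) auto
  ultimately show thesis
    using that by blast
qed

definition dual_seminorm :: "('a::real_normed_vector \<Rightarrow>\<^sub>L real) set \<Rightarrow> 'a \<Rightarrow> real" where
  "dual_seminorm Y x = sup_seminorm (Y \<inter> cball 0 1) x"

lemma pointwise_bounded_unit_ball: "pointwise_bounded (Y \<inter> cball 0 1)"
  unfolding pointwise_bounded_def
proof
  fix x
  have "\<bar>blinfun_apply f x\<bar> \<le> norm x" if "f \<in> Y \<inter> cball 0 1" for f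
    using that norm_blinfun[of f x] mult_right_le_one_le[of "norm x" "norm f"]
    by (simp add: mult.commute)
  then show "bdd_above ((\<lambda>f. \<bar>blinfun_apply f x\<bar>) ` (Y \<inter> cball 0 1))"
    by (rule bdd_aboveI2)
qed

lemma unit_ball_nonempty: "subspace Y \<Longrightarrow> Y \<inter> cball 0 1 \<noteq> {}"
  using subspace_0 by fastforce

lemma seminorm_dual_seminorm: "subspace Y \<Longrightarrow> seminorm (dual_seminorm Y)"
  unfolding dual_seminorm_def[abs_def]
  by (intro seminorm_sup_seminorm unit_ball_nonempty pointwise_bounded_unit_ball)

lemma dual_seminorm_le_norm: "subspace Y \<Longrightarrow> dual_seminorm Y x \<le> norm x"
  unfolding dual_seminorm_def
proof (rule sup_seminorm_le[OF unit_ball_nonempty])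
  fix f
  assume "f \<in> Y \<inter> cball 0 1"
  then show "\<bar>blinfun_apply f x\<bar> \<le> norm x"
    using norm_blinfun[of f x] mult_right_le_one_le[of "norm x" "norm f"] by (simp add: mult.commute)
qed

lemma abs_apply_le_dual_seminorm:
  assumes Y: "subspace Y" and "y \<in> Y"
  shows "\<bar>blinfun_apply y x\<bar> \<le> norm y * dual_seminorm Y x"
proof (cases "y = 0")
  case False
  then have "(1 / norm y) *\<^sub>R y \<in> Y \<inter> cball 0 1"
    using subspace_scale[OF Y \<open>y \<in> Y\<close>] by simp
  then have "\<bar>blinfun_apply ((1 / norm y) *\<^sub>R y) x\<bar> \<le> dual_seminorm Y x"
    unfolding dual_seminorm_def by (rule sup_seminorm_ge[OF pointwise_bounded_unit_ball])
  then show ?thesis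
    using False by (simp add: blinfun.scaleR_left abs_mult field_simps)
qed (simp add: seminorm_nonneg[OF seminorm_dual_seminorm[OF Y]])

lemma closedin_dual_seminorm_le:
  assumes Y: "subspace Y"
  shows "closedin (mackey_topology Y) {x. dual_seminorm Y x \<le> r}"
proof -
  have "openin (mackey_topology Y) {x. r < dual_seminorm Y x}"
  proof (subst openin_subopen, intro ballI)
    fix x
    assume "x \<in> {x. r < dual_seminorm Y x}"
    then have "\<not> (\<forall>f\<in>Y \<inter> cball 0 1. \<bar>blinfun_apply f x\<bar> \<le> r)"
      using sup_seminorm_le[OF unit_ball_nonempty[OF Y], of x r] unfolding dual_seminorm_def by force
    then obtain y where y: "y \<in> Y \<inter> cball 0 1" "r < \<bar>blinfun_apply y x\<bar>"
      by (auto simp: not_le)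
    have K: "symmetric_segment y \<in> mackey_family Y"
      using Y y(1) by (intro symmetric_segment_in_mackey_family) auto
    have "mackey_ball (symmetric_segment y) x (\<bar>blinfun_apply y x\<bar> - r) \<subseteq> {x. r < dual_seminorm Y x}"
    proof
      fix z
      assume "z \<in> mackey_ball (symmetric_segment y) x (\<bar>blinfun_apply y x\<bar> - r)"
      then have "\<bar>blinfun_apply y z - blinfun_apply y x\<bar> < \<bar>blinfun_apply y x\<bar> - r"
        unfolding mackey_ball_def sup_seminorm_symmetric_segment blinfun.diff_right by simp
      then have "r < \<bar>blinfun_apply y z\<bar>"
        using abs_triangle_ineq2[of "blinfun_apply y x" "blinfun_apply y z"] abs_minus_commute by linarith
      also have "\<bar>blinfun_apply y z\<bar> \<le> dual_seminorm Y z"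
        unfolding dual_seminorm_def using y(1) by (rule sup_seminorm_ge[OF pointwise_bounded_unit_ball])
      finally show "z \<in> {x. r < dual_seminorm Y x}"
        by simp
    qed
    then show "\<exists>T. openin (mackey_topology Y) T \<and> x \<in> T \<and> T \<subseteq> {x. r < dual_seminorm Y x}"
      using openin_mackey_ball[OF K] centre_in_mackey_ball[OF K] y(2) by (metis diff_gt_0_iff_gt)
  qed
  moreover have "{x. dual_seminorm Y x \<le> r} = topspace (mackey_topology Y) - {x. r < dual_seminorm Y x}"
    using topspace_mackey_topology[OF Y] by auto
  ultimately show ?thesis
    by (simp add: closedin_diff)
qed

lemma mackey_bounded_dual_seminorm_le:
  fixes Y :: "('a::banach \<Rightarrow>\<^sub>L real) set"
  assumes Y: "subspace Y" and "r \<ge> 0"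
  shows "mackey_bounded Y {x. dual_seminorm Y x \<le> r}"
  unfolding mackey_bounded_def
proof
  fix K
  assume K: "K \<in> mackey_family Y"
  obtain M where M: "\<And>f. f \<in> K \<Longrightarrow> norm f \<le> M"
    using bounded_mackey_family[OF K] unfolding bounded_iff by blast
  have "sup_seminorm K x \<le> M * r" if "dual_seminorm Y x \<le> r" for x
  proof (rule sup_seminorm_le[OF mackey_familyD(2)[OF K]])
    fix f
    assume "f \<in> K"
    then have "\<bar>blinfun_apply f x\<bar> \<le> norm f * dual_seminorm Y x"
      using mackey_familyD(1)[OF K] by (intro abs_apply_le_dual_seminorm[OF Y]) auto
    also have "\<dots> \<le> M * r"
      using M[OF \<open>f \<in> K\<close>] that seminorm_nonneg[OF seminorm_dual_seminorm[OF Y]]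
      by (meson mult_mono norm_ge_zero order_trans)
    finally show "\<bar>blinfun_apply f x\<bar> \<le> M * r" .
  qed
  then show "\<exists>M. \<forall>x\<in>{x. dual_seminorm Y x \<le> r}. sup_seminorm K x \<le> M"
    by blast
qed

lemma exists_functional_if_far_from_dual_ball:
  assumes Y: "subspace Y" and K: "K \<in> mackey_family Y" and "e > 0" "r > 0"
    and far: "\<And>b. dual_seminorm Y b \<le> r \<Longrightarrow> e \<le> sup_seminorm K (a - b)"
  obtains \<psi> where "\<psi> \<in> K" "norm \<psi> \<le> e / r" "e \<le> blinfun_apply \<psi> a"
proof -
  define p where "p x = sup_seminorm K x / e" for x
  define q where "q x = dual_seminorm Y x / r" for x
  have "seminorm p" "seminorm q"
    unfolding p_def[abs_def] q_def[abs_def] using \<open>e > 0\<close> \<open>r > 0\<close>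
    by (auto intro!: seminorm_divide seminorm_sup_seminorm seminorm_dual_seminorm Y
        mackey_familyD(2)[OF K] pointwise_bounded_mackey_family[OF K])
  then obtain l where l: "linear l" "\<And>x. \<bar>l x\<bar> \<le> p x" "\<And>x. \<bar>l x\<bar> \<le> q x"
    "l a = infimal_convolution p q a"
    using hahn_banach_infimal_convolution[of p q a] by blast
  \<comment> \<open>the infimal convolution is the gauge of the sum of the unit balls of \<open>p\<close> and \<open>q\<close>\<close>
  have "1 \<le> infimal_convolution p q a"
  proof (rule le_infimal_convolution)
    fix w
    show "1 \<le> p (a - w) + q w"
    proof (cases "q w < 1")
      case True
      then have "e \<le> sup_seminorm K (a - w)"
        using \<open>r > 0\<close> by (intro far) (simp add: q_def)
      then have "1 \<le> p (a - w)"
        using \<open>e > 0\<close> by (simp add: p_def)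
      then show ?thesis
        using seminorm_nonneg[OF \<open>seminorm q\<close>, of w] by linarith
    qed (use seminorm_nonneg[OF \<open>seminorm p\<close>, of "a - w"] in linarith)
  qed
  have "\<bar>l x\<bar> \<le> 1 / r * norm x" for x
    using l(3)[of x] dual_seminorm_le_norm[OF Y, of x] \<open>r > 0\<close> by (simp add: q_def field_simps)
  then obtain \<psi> where \<psi>: "\<And>x. blinfun_apply \<psi> x = l x" "norm \<psi> \<le> 1 / r"
    using bounded_linear_functional_imp_blinfun[OF l(1)] \<open>r > 0\<close> by (metis less_eq_real_def zero_less_divide_1_iff)
  show thesis
  proof (rule that[of "e *\<^sub>R \<psi>"])
    show "e *\<^sub>R \<psi> \<in> K"
      using mackey_familyD(3,4,2)[OF K] by (rule weak_star_bipolar)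
        (use l(2) \<open>e > 0\<close> in \<open>simp add: \<psi> blinfun.scaleR_left p_def abs_mult field_simps\<close>)
    show "norm (e *\<^sub>R \<psi>) \<le> e / r"
      using mult_left_mono[OF \<psi>(2), of e] \<open>e > 0\<close> by simp
    show "e \<le> blinfun_apply (e *\<^sub>R \<psi>) a"
      using \<open>1 \<le> infimal_convolution p q a\<close> l(4) \<open>e > 0\<close> by (simp add: \<psi> blinfun.scaleR_left)
  qed
qed

lemma mackey_cauchy_near_dual_ball:
  assumes Y: "subspace Y" and F: "mackey_cauchy Y F" and "r0 \<ge> 0"
    and bound: "\<And>y. y \<in> Y \<Longrightarrow> \<bar>limit_functional F y\<bar> \<le> r0 * norm y"
    and K: "K \<in> mackey_family Y" and "e > 0" and A: "eventually (\<lambda>x. x \<in> A) F"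
  obtains a b where "a \<in> A" "dual_seminorm Y b \<le> 4 * r0 + 1" "b \<in> mackey_ball K a e"
proof -
  note near = that
  define r where "r = 4 * r0 + 1"
  have "r > 0"
    unfolding r_def using \<open>r0 \<ge> 0\<close> by simp
  obtain A' where A': "eventually (\<lambda>x. x \<in> A') F"
    "\<And>x x'. x \<in> A' \<Longrightarrow> x' \<in> A' \<Longrightarrow> sup_seminorm K (x - x') < e / 4"
    using mackey_cauchyE[OF F K] \<open>e > 0\<close> by (metis zero_less_divide_iff zero_less_numeral)
  obtain a where "a \<in> A" "a \<in> A'"
    using eventually_happens[OF eventually_conj[OF A A'(1)]] mackey_cauchy_nontrivial[OF F] by auto
  show thesis
  proof (rule ccontr)
    assume "\<not> thesis"
    then have "e \<le> sup_seminorm K (a - b)" if "dual_seminorm Y b \<le> r" for b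
      using near[OF \<open>a \<in> A\<close>, of b] that \<open>\<not> thesis\<close>
        sup_seminorm_minus_commute[OF mackey_familyD(2)[OF K] pointwise_bounded_mackey_family[OF K]]
      unfolding r_def mackey_ball_def by (metis mem_Collect_eq not_le)
    then obtain \<psi> where "\<psi> \<in> K" "norm \<psi> \<le> e / r" "e \<le> blinfun_apply \<psi> a"
      using exists_functional_if_far_from_dual_ball[OF Y K \<open>e > 0\<close> \<open>r > 0\<close>] by blast
    moreover have "\<bar>limit_functional F \<psi> - blinfun_apply \<psi> a\<bar> \<le> e / 4"
      using limit_functional_near[OF F Y K \<open>\<psi> \<in> K\<close> A' \<open>a \<in> A'\<close>] .
    moreover have "\<bar>limit_functional F \<psi>\<bar> \<le> e / 4"
    proof -
      have "\<bar>limit_functional F \<psi>\<bar> \<le> r0 * (e / r)"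
        using bound[of \<psi>] mackey_familyD(1)[OF K] \<open>\<psi> \<in> K\<close> \<open>norm \<psi> \<le> e / r\<close> \<open>r0 \<ge> 0\<close>
        by (meson mult_left_mono order_trans subsetD)
      also have "\<dots> \<le> e / 4"
        unfolding r_def using \<open>e > 0\<close> \<open>r0 \<ge> 0\<close> by (simp add: field_simps)
      finally show ?thesis .
    qed
    ultimately show False
      using \<open>e > 0\<close> by linarith
  qed
qed

definition approximating_filter :: "('a::real_normed_vector \<Rightarrow>\<^sub>L real) set \<Rightarrow> 'a filter \<Rightarrow> 'a set \<Rightarrow> 'a filter" where
  "approximating_filter Y F D =
     (INF (A, K, e)\<in>{(A, K, e). eventually (\<lambda>x. x \<in> A) F \<and> K \<in> mackey_family Y \<and> e > 0}.
        principal (D \<inter> (\<Union>a\<in>A. mackey_ball K a e)))"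

lemma eventually_approximating_filter:
  assumes Y: "subspace Y"
  shows "eventually P (approximating_filter Y F D) \<longleftrightarrow>
    (\<exists>A K e. eventually (\<lambda>x. x \<in> A) F \<and> K \<in> mackey_family Y \<and> e > 0 \<and>
       (\<forall>b\<in>D \<inter> (\<Union>a\<in>A. mackey_ball K a e). P b))"
proof -
  define I where "I = {(A, K, e). eventually (\<lambda>x. x \<in> A) F \<and> K \<in> mackey_family Y \<and> (e::real) > 0}"
  define S where "S = (\<lambda>(A, K, e). D \<inter> (\<Union>a\<in>A. mackey_ball K a e))"
  have "(UNIV, symmetric_segment 0, 1) \<in> I"
    unfolding I_def using symmetric_segment_in_mackey_family[OF Y subspace_0[OF Y]] by simp
  then have "I \<noteq> {}"
    by blast
  moreover have "\<exists>k\<in>I. principal (S k) \<le> inf (principal (S i)) (principal (S j))"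
    if "i \<in> I" "j \<in> I" for i j
  proof -
    obtain A1 K1 e1 A2 K2 e2 where i: "i = (A1, K1, e1)" "eventually (\<lambda>x. x \<in> A1) F" "K1 \<in> mackey_family Y" "e1 > 0"
      and j: "j = (A2, K2, e2)" "eventually (\<lambda>x. x \<in> A2) F" "K2 \<in> mackey_family Y" "e2 > 0"
      using \<open>i \<in> I\<close> \<open>j \<in> I\<close> unfolding I_def by auto
    obtain K where "K \<in> mackey_family Y"
      and balls: "\<And>z. mackey_ball K z (min e1 e2) \<subseteq> mackey_ball K1 z e1 \<inter> mackey_ball K2 z e2"
      using mackey_ball_Int[OF Y i(3) j(3), of e1 e2] by blast
    then have "(A1 \<inter> A2, K, min e1 e2) \<in> I"
      unfolding I_def using i j eventually_conj[OF i(2) j(2)] by auto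
    moreover have "S (A1 \<inter> A2, K, min e1 e2) \<subseteq> S i \<inter> S j"
      unfolding S_def i(1) j(1) using balls by blast
    ultimately show ?thesis
      by auto
  qed
  ultimately have "eventually P (INF i\<in>I. principal (S i)) \<longleftrightarrow> (\<exists>i\<in>I. \<forall>b\<in>S i. P b)"
    unfolding eventually_principal[symmetric] by (rule eventually_INF_base)
  moreover have "approximating_filter Y F D = (INF i\<in>I. principal (S i))"
    unfolding approximating_filter_def I_def S_def by (simp add: case_prod_unfold)
  ultimately show ?thesis
    unfolding I_def S_def by (simp add: Bex_def)
qed

lemma approximating_filter_nontrivial:
  assumes "subspace Y"
    and approx: "\<And>A K e. eventually (\<lambda>x. x \<in> A) F \<Longrightarrow> K \<in> mackey_family Y \<Longrightarrow> e > 0 \<Longrightarrow>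
      D \<inter> (\<Union>a\<in>A. mackey_ball K a e) \<noteq> {}"
  shows "approximating_filter Y F D \<noteq> bot"
  using approx unfolding trivial_limit_def eventually_approximating_filter[OF assms(1)] by blast

lemma eventually_in_approximating_filter:
  assumes "subspace Y"
  shows "eventually (\<lambda>x. x \<in> D) (approximating_filter Y F D)"
  unfolding eventually_approximating_filter[OF assms]
  using symmetric_segment_in_mackey_family[OF assms subspace_0[OF assms]]
  by (intro exI[of _ UNIV] exI[of _ "symmetric_segment 0"] exI[of _ 1]) auto

lemma mackey_cauchy_approximating_filter:
  assumes Y: "subspace Y" and F: "mackey_cauchy Y F"
    and "approximating_filter Y F D \<noteq> bot"
  shows "mackey_cauchy Y (approximating_filter Y F D)"
  unfolding mackey_cauchy_def
proof (intro conjI ballI allI impI assms(3))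
  fix K and e :: real
  assume K: "K \<in> mackey_family Y" and "e > 0"
  have K_ne: "K \<noteq> {}" and K_bdd: "pointwise_bounded K"
    using K by (auto dest: mackey_familyD pointwise_bounded_mackey_family)
  obtain A where A: "eventually (\<lambda>x. x \<in> A) F" "\<And>x x'. x \<in> A \<Longrightarrow> x' \<in> A \<Longrightarrow> sup_seminorm K (x - x') < e / 3"
    using mackey_cauchyE[OF F K] \<open>e > 0\<close> by (metis zero_less_divide_iff zero_less_numeral)
  define B where "B = D \<inter> (\<Union>a\<in>A. mackey_ball K a (e / 3))"
  have "eventually (\<lambda>x. x \<in> B) (approximating_filter Y F D)"
    unfolding eventually_approximating_filter[OF Y] B_def using A(1) K \<open>e > 0\<close>
    by (intro exI[of _ A] exI[of _ K] exI[of _ "e / 3"]) auto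
  moreover have "sup_seminorm K (b - b') < e" if bb': "b \<in> B" "b' \<in> B" for b b'
  proof -
    obtain a a' where "a \<in> A" "sup_seminorm K (b - a) < e / 3" "a' \<in> A" "sup_seminorm K (b' - a') < e / 3"
      using bb' unfolding B_def mackey_ball_def by blast
    moreover have "sup_seminorm K (b - b') \<le> sup_seminorm K (b - a) + sup_seminorm K (a - a') + sup_seminorm K (a' - b')"
      using sup_seminorm_diff_triangle[OF K_ne K_bdd, of b b' a] sup_seminorm_diff_triangle[OF K_ne K_bdd, of a b' a']
      by linarith
    ultimately show ?thesis
      using A(2)[of a a'] sup_seminorm_minus_commute[OF K_ne K_bdd, of a' b'] by linarith
  qed
  ultimately show "\<exists>B. eventually (\<lambda>x. x \<in> B) (approximating_filter Y F D) \<and>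
      (\<forall>b\<in>B. \<forall>b'\<in>B. sup_seminorm K (b - b') < e)"
    by blast
qed

lemma mackey_converges_if_approximating_filter_converges:
  assumes Y: "subspace Y" and F: "mackey_cauchy Y F"
    and "approximating_filter Y F D \<noteq> bot" and H: "mackey_converges Y (approximating_filter Y F D) x0"
  shows "mackey_converges Y F x0"
  unfolding mackey_converges_def
proof (intro ballI allI impI)
  fix K and e :: real
  assume K: "K \<in> mackey_family Y" and "e > 0"
  have K_ne: "K \<noteq> {}" and K_bdd: "pointwise_bounded K"
    using K by (auto dest: mackey_familyD pointwise_bounded_mackey_family)
  obtain A where A: "eventually (\<lambda>x. x \<in> A) F" "\<And>x x'. x \<in> A \<Longrightarrow> x' \<in> A \<Longrightarrow> sup_seminorm K (x - x') < e / 3"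
    using mackey_cauchyE[OF F K] \<open>e > 0\<close> by (metis zero_less_divide_iff zero_less_numeral)
  have "eventually (\<lambda>b. b \<in> (\<Union>a\<in>A. mackey_ball K a (e / 3)) \<and> sup_seminorm K (b - x0) < e / 3)
      (approximating_filter Y F D)"
  proof (rule eventually_conj)
    show "eventually (\<lambda>b. b \<in> (\<Union>a\<in>A. mackey_ball K a (e / 3))) (approximating_filter Y F D)"
      unfolding eventually_approximating_filter[OF Y] using A(1) K \<open>e > 0\<close>
      by (intro exI[of _ A] exI[of _ K] exI[of _ "e / 3"]) auto
    show "eventually (\<lambda>b. sup_seminorm K (b - x0) < e / 3) (approximating_filter Y F D)"
      using H K \<open>e > 0\<close> unfolding mackey_converges_def by (meson divide_pos_pos zero_less_numeral)
  qed
  then obtain a b where "a \<in> A" "sup_seminorm K (b - a) < e / 3" "sup_seminorm K (b - x0) < e / 3"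
    using eventually_happens assms(3) unfolding mackey_ball_def by blast
  show "eventually (\<lambda>x. sup_seminorm K (x - x0) < e) F"
  proof (rule eventually_mono[OF A(1)])
    fix x
    assume "x \<in> A"
    have "sup_seminorm K (x - x0) \<le> sup_seminorm K (x - a) + sup_seminorm K (a - b) + sup_seminorm K (b - x0)"
      using sup_seminorm_diff_triangle[OF K_ne K_bdd, of x x0 a] sup_seminorm_diff_triangle[OF K_ne K_bdd, of a x0 b]
      by linarith
    then show "sup_seminorm K (x - x0) < e"
      using A(2)[OF \<open>x \<in> A\<close> \<open>a \<in> A\<close>] \<open>sup_seminorm K (b - a) < e / 3\<close> \<open>sup_seminorm K (b - x0) < e / 3\<close>
        sup_seminorm_minus_commute[OF K_ne K_bdd, of a b] by linarith
  qed
qed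

theorem mackey_quasi_complete_imp_complete:
  fixes Y :: "('a::banach \<Rightarrow>\<^sub>L real) set"
  assumes Y: "subspace Y" "closed Y" and quasi_complete: "mackey_quasi_complete Y"
  shows "mackey_complete Y"
  unfolding mackey_complete_def mackey_complete_set_def
proof (intro allI impI)
  fix F
  assume "mackey_cauchy Y F \<and> eventually (\<lambda>x. x \<in> UNIV) F"
  then have F: "mackey_cauchy Y F"
    by blast
  obtain r0 where "r0 \<ge> 0" and bound: "\<And>y. y \<in> Y \<Longrightarrow> \<bar>limit_functional F y\<bar> \<le> r0 * norm y"
    using limit_functional_bounded[OF Y F] by blast
  define D where "D = {x. dual_seminorm Y x \<le> 4 * r0 + 1}"
  define H where "H = approximating_filter Y F D"
  have "H \<noteq> bot"
    unfolding H_def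
  proof (rule approximating_filter_nontrivial[OF Y(1)])
    fix A K and e :: real
    assume "eventually (\<lambda>x. x \<in> A) F" "K \<in> mackey_family Y" "e > 0"
    then obtain a b where "a \<in> A" "dual_seminorm Y b \<le> 4 * r0 + 1" "b \<in> mackey_ball K a e"
      using mackey_cauchy_near_dual_ball[OF Y(1) F \<open>r0 \<ge> 0\<close> bound] by blast
    then show "D \<inter> (\<Union>a\<in>A. mackey_ball K a e) \<noteq> {}"
      unfolding D_def by blast
  qed
  have "mackey_bounded Y D" "closedin (mackey_topology Y) D"
    unfolding D_def using \<open>r0 \<ge> 0\<close>
    by (simp_all add: mackey_bounded_dual_seminorm_le[OF Y(1)] closedin_dual_seminorm_le[OF Y(1)])
  then have "mackey_complete_set Y D"
    using quasi_complete unfolding mackey_quasi_complete_def by blast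
  moreover have "mackey_cauchy Y H" "eventually (\<lambda>x. x \<in> D) H"
    unfolding H_def using mackey_cauchy_approximating_filter[OF Y(1) F] \<open>H \<noteq> bot\<close>
      eventually_in_approximating_filter[OF Y(1)] by (simp_all add: H_def)
  ultimately obtain x0 where "mackey_converges Y H x0"
    unfolding mackey_complete_set_def by blast
  then show "\<exists>x0\<in>UNIV. mackey_converges Y F x0"
    using mackey_converges_if_approximating_filter_converges[OF Y(1) F] \<open>H \<noteq> bot\<close>
    unfolding H_def by blast
qed

theorem proposition2p5:
  fixes Y :: "('a::banach \<Rightarrow>\<^sub>L real) set"
  assumes "subspace Y"
    and "closed Y"
    and "weak_star_topology closure_of Y = topspace weak_star_topology"
  shows "mackey_quasi_complete Y \<longleftrightarrow> mackey_complete Y"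
  using mackey_complete_imp_quasi_complete[OF assms(1)] mackey_quasi_complete_imp_complete[OF assms(1,2)]
  by blast

end
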